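(* Let $N$ be a finitely generated torsion-free nilpotent group and let $\phi\in\mathrm{Aut}(N)$ be such that the induced automorphism of $H_1(N,\mathbb{Q})$ is unipotent. Then $K_{\phi}=1$.
   Context: For a finitely generated group $G$ with finite generating set $S$, $\ell=\ell_S$ denotes word length with respect to $S$. For $\phi\in\mathrm{Aut}(G)$, the entropy of $\phi$ is $K_{\phi}=\max_{s\in S}\lim_{n\to\infty}\ell(\phi^n(s))^{1/n}$; it is independent of $S$. A linear automorphism $A$ is unipotent if $A-I$ is nilpotent. *)

theory Defs
  imports Complex_Main "HOL-Algebra.Algebra"
begin

text \<open>Lower central series: gamma_1 = G (index 0 here), gamma_{i+1} = [G, gamma_i].\<close>
fun lower_central :: "('a, 'b) monoid_scheme \<Rightarrow> nat \<Rightarrow> 'a set" where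
  "lower_central G 0 = carrier G"
| "lower_central G (Suc n) =
     generate G (\<Union>x \<in> carrier G. \<Union>y \<in> lower_central G n.
                   {x \<otimes>\<^bsub>G\<^esub> y \<otimes>\<^bsub>G\<^esub> inv\<^bsub>G\<^esub> x \<otimes>\<^bsub>G\<^esub> inv\<^bsub>G\<^esub> y})"

definition nilpotent_group :: "('a, 'b) monoid_scheme \<Rightarrow> bool" where
  "nilpotent_group G \<longleftrightarrow> group G \<and> (\<exists>c. lower_central G c = {\<one>\<^bsub>G\<^esub>})"

definition torsion_free_group :: "('a, 'b) monoid_scheme \<Rightarrow> bool" where
  "torsion_free_group G \<longleftrightarrow>
     (\<forall>x \<in> carrier G. \<forall>n::nat. n > 0 \<longrightarrow> x [^]\<^bsub>G\<^esub> n = \<one>\<^bsub>G\<^esub> \<longrightarrow> x = \<one>\<^bsub>G\<^esub>)"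

definition finitely_generated_group :: "('a, 'b) monoid_scheme \<Rightarrow> bool" where
  "finitely_generated_group G \<longleftrightarrow>
     (\<exists>S. finite S \<and> S \<subseteq> carrier G \<and> generate G S = carrier G)"

text \<open>H_1(G, Z) = abelianization G / [G,G] (as a quotient group of cosets).\<close>
definition abelianization :: "('a, 'b) monoid_scheme \<Rightarrow> 'a set monoid" where
  "abelianization G = G Mod (derived G (carrier G))"

text \<open>Map induced by phi on the abelianization: the coset [G,G] x maps to its image,
  which is the coset [G,G] (phi x) when phi is an automorphism.\<close>
definition induced_ab :: "('a \<Rightarrow> 'a) \<Rightarrow> 'a set \<Rightarrow> 'a set" where
  "induced_ab \<phi> C = \<phi> ` C"

text \<open>For an endomorphism psi of an abelian group A (written multiplicatively), the induced
  map on A \<otimes> Q is unipotent iff (psi - id)^k = 0 on A \<otimes> Q for some k, i.e. iff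
  (psi - id)^k maps every element of A to a torsion element.\<close>
definition rationally_unipotent :: "('c, 'd) monoid_scheme \<Rightarrow> ('c \<Rightarrow> 'c) \<Rightarrow> bool" where
  "rationally_unipotent A \<psi> \<longleftrightarrow>
     (\<exists>k::nat. \<forall>c \<in> carrier A. \<exists>m::nat. m > 0 \<and>
        (((\<lambda>x. \<psi> x \<otimes>\<^bsub>A\<^esub> inv\<^bsub>A\<^esub> x) ^^ k) c) [^]\<^bsub>A\<^esub> m = \<one>\<^bsub>A\<^esub>)"

definition word_length :: "('a, 'b) monoid_scheme \<Rightarrow> 'a set \<Rightarrow> 'a \<Rightarrow> nat" where
  "word_length G S g = (LEAST n. \<exists>ws. length ws = n \<and> set ws \<subseteq> S \<union> m_inv G ` S \<and>
                                       foldr (\<otimes>\<^bsub>G\<^esub>) ws \<one>\<^bsub>G\<^esub> = g)"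

definition growth_seq :: "('a, 'b) monoid_scheme \<Rightarrow> 'a set \<Rightarrow> ('a \<Rightarrow> 'a) \<Rightarrow> 'a \<Rightarrow> nat \<Rightarrow> real" where
  "growth_seq G S \<phi> s n = real (word_length G S ((\<phi> ^^ n) s)) powr (1 / real n)"

definition aut_entropy :: "('a, 'b) monoid_scheme \<Rightarrow> 'a set \<Rightarrow> ('a \<Rightarrow> 'a) \<Rightarrow> real" where
  "aut_entropy G S \<phi> = Max ((\<lambda>s. lim (growth_seq G S \<phi> s)) ` S)"

end

theory Submission
  imports Defs "HOL-Real_Asymp.Real_Asymp"
begin

(* Write delta x = phi x * x^-1, the multiplicative analogue of phi - 1. Unipotence on
   H_1(N, Q) says that delta^k maps N into elements that are torsion modulo [N, N]. Since the
   commutator map gamma_1 x gamma_n -> gamma_(n+1) / gamma_(n+2) is bilinear and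
   phi [x, y] = [delta x * x, delta y * y], the same holds, for a larger k, on every layer
   gamma_n / gamma_(n+1) of the lower central series.

   Descending from the trivial term gamma_c, every layer then consists of elements g whose
   orbit length l(phi^n g) is bounded by a polynomial in n: the layer is a finitely generated
   abelian group modulo the next term, its torsion is finite and permuted by phi up to factors
   of polynomial growth, which yields a polynomial bound on it, and k applications of delta
   reduce any element of the layer to this torsion part.

   Polynomial growth gives l(phi^n s)^(1/n) -> 1 for s /= 1 (phi is injective) and the
   sequence is 0 for s = 1, so the maximum over the generators is 1. *)

section \<open>Commutators and the lower central series\<close>

definition commutator :: "('a, 'b) monoid_scheme \<Rightarrow> 'a \<Rightarrow> 'a \<Rightarrow> 'a" where
  "commutator G x y = x \<otimes>\<^bsub>G\<^esub> y \<otimes>\<^bsub>G\<^esub> inv\<^bsub>G\<^esub> x \<otimes>\<^bsub>G\<^esub> inv\<^bsub>G\<^esub> y"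

definition central :: "('a, 'b) monoid_scheme \<Rightarrow> 'a \<Rightarrow> bool" where
  "central G z \<longleftrightarrow> z \<in> carrier G \<and> (\<forall>g\<in>carrier G. z \<otimes>\<^bsub>G\<^esub> g = g \<otimes>\<^bsub>G\<^esub> z)"

lemma lower_central_Suc:
  "lower_central G (Suc n) =
     generate G {commutator G x y | x y. x \<in> carrier G \<and> y \<in> lower_central G n}"
  unfolding lower_central.simps(2) commutator_def by (rule arg_cong[where f = "generate G"]) auto

declare lower_central.simps(2) [simp del]

context group begin

lemma mult_inv_cancel_left [simp]: "x \<in> carrier G \<Longrightarrow> y \<in> carrier G \<Longrightarrow> x \<otimes> (inv x \<otimes> y) = y"
  by (simp add: m_assoc[symmetric])

lemma inv_mult_cancel_left [simp]: "x \<in> carrier G \<Longrightarrow> y \<in> carrier G \<Longrightarrow> inv x \<otimes> (x \<otimes> y) = y"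
  by (simp add: m_assoc[symmetric])

lemma commutator_closed [simp]: "x \<in> carrier G \<Longrightarrow> y \<in> carrier G \<Longrightarrow> commutator G x y \<in> carrier G"
  by (simp add: commutator_def)

lemma inv_commutator: "x \<in> carrier G \<Longrightarrow> y \<in> carrier G \<Longrightarrow> inv (commutator G x y) = commutator G y x"
  by (simp add: commutator_def m_assoc inv_mult_group r_inv l_inv)

lemma commutator_one_left [simp]: "y \<in> carrier G \<Longrightarrow> commutator G \<one> y = \<one>"
  by (simp add: commutator_def)

lemma commutator_one_right [simp]: "x \<in> carrier G \<Longrightarrow> commutator G x \<one> = \<one>"
  by (simp add: commutator_def)

lemma commutator_eq_one_iff:
  "a \<in> carrier G \<Longrightarrow> b \<in> carrier G \<Longrightarrow> commutator G a b = \<one> \<longleftrightarrow> a \<otimes> b = b \<otimes> a"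
  using inv_solve_right'[of \<one> "a \<otimes> b" "b \<otimes> a"]
  by (simp add: commutator_def m_assoc inv_mult_group r_inv l_inv)

lemma commutator_mult_left:
  "a \<in> carrier G \<Longrightarrow> b \<in> carrier G \<Longrightarrow> y \<in> carrier G \<Longrightarrow>
   commutator G (a \<otimes> b) y = a \<otimes> commutator G b y \<otimes> inv a \<otimes> commutator G a y"
  by (simp add: commutator_def m_assoc inv_mult_group r_inv l_inv)

lemma commutator_mult_right:
  "x \<in> carrier G \<Longrightarrow> y \<in> carrier G \<Longrightarrow> z \<in> carrier G \<Longrightarrow>
   commutator G x (y \<otimes> z) = commutator G x y \<otimes> (y \<otimes> commutator G x z \<otimes> inv y)"
  by (simp add: commutator_def m_assoc inv_mult_group r_inv l_inv)

lemma commutator_inv_left: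
  "x \<in> carrier G \<Longrightarrow> y \<in> carrier G \<Longrightarrow> commutator G (inv x) y = inv x \<otimes> commutator G y x \<otimes> x"
  by (simp add: commutator_def m_assoc inv_mult_group r_inv l_inv)

lemma commutator_inv_right:
  "x \<in> carrier G \<Longrightarrow> y \<in> carrier G \<Longrightarrow> commutator G x (inv y) = inv y \<otimes> inv (commutator G x y) \<otimes> y"
  by (simp add: commutator_def m_assoc inv_mult_group r_inv l_inv)

lemma hall_witt_identity:
  assumes "x \<in> carrier G" "y \<in> carrier G" "z \<in> carrier G"
  shows "(inv y \<otimes> commutator G (commutator G y (inv x)) (inv z) \<otimes> y) \<otimes>
         (inv z \<otimes> commutator G (commutator G z (inv y)) (inv x) \<otimes> z) \<otimes>
         (inv x \<otimes> commutator G (commutator G x (inv z)) (inv y) \<otimes> x) = \<one>"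
  using assms by (simp add: commutator_def m_assoc inv_mult_group r_inv l_inv)

lemma central_carrier: "central G z \<Longrightarrow> z \<in> carrier G"
  by (simp add: central_def)

lemma central_commute: "central G z \<Longrightarrow> g \<in> carrier G \<Longrightarrow> z \<otimes> g = g \<otimes> z"
  by (simp add: central_def)

lemma central_inv: assumes "central G c" shows "central G (inv c)"
proof -
  have c: "c \<in> carrier G" using assms by (rule central_carrier)
  have "inv c \<otimes> g = g \<otimes> inv c" if g: "g \<in> carrier G" for g
  proof -
    have "inv c \<otimes> (c \<otimes> g) \<otimes> inv c = inv c \<otimes> (g \<otimes> c) \<otimes> inv c"
      using central_commute[OF assms g] by simp
    then show ?thesis using c g by (simp add: m_assoc)
  qed
  then show ?thesis using c unfolding central_def by blast
qed

lemma central_mult_inv_distrib: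
  assumes "central G a" "central G b" "central G c" "central G d"
  shows "(a \<otimes> b) \<otimes> inv (c \<otimes> d) = (a \<otimes> inv c) \<otimes> (b \<otimes> inv d)"
proof -
  have carr: "a \<in> carrier G" "b \<in> carrier G" "c \<in> carrier G" "d \<in> carrier G"
    using assms by (simp_all add: central_carrier)
  have "(a \<otimes> b) \<otimes> inv (c \<otimes> d) = a \<otimes> ((b \<otimes> inv d) \<otimes> inv c)"
    using carr by (simp add: m_assoc inv_mult_group r_inv l_inv)
  also have "(b \<otimes> inv d) \<otimes> inv c = inv c \<otimes> (b \<otimes> inv d)"
    using central_commute[OF central_inv[OF assms(3)]] carr by simp
  finally show ?thesis using carr by (simp add: m_assoc)
qed

lemma commutator_mult_left_central:
  assumes "a \<in> carrier G" "b \<in> carrier G" "y \<in> carrier G"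
    and "central G (commutator G b y)"
  shows "commutator G (a \<otimes> b) y = commutator G a y \<otimes> commutator G b y"
proof -
  have "a \<otimes> commutator G b y \<otimes> inv a = commutator G b y \<otimes> a \<otimes> inv a"
    using central_commute[OF assms(4) assms(1)] by simp
  also have "\<dots> = commutator G b y" using assms(1-3) by (simp add: m_assoc)
  finally have "a \<otimes> commutator G b y \<otimes> inv a = commutator G b y" .
  then have "commutator G (a \<otimes> b) y = commutator G b y \<otimes> commutator G a y"
    using assms(1-3) by (simp add: commutator_mult_left)
  also have "\<dots> = commutator G a y \<otimes> commutator G b y"
    using central_commute[OF assms(4)] assms(1-3) by simp
  finally show ?thesis .
qed

lemma commutator_mult_right_central:
  assumes "x \<in> carrier G" "y \<in> carrier G" "z \<in> carrier G" and "central G (commutator G x z)"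
  shows "commutator G x (y \<otimes> z) = commutator G x y \<otimes> commutator G x z"
proof -
  have "y \<otimes> commutator G x z \<otimes> inv y = commutator G x z \<otimes> y \<otimes> inv y"
    using central_commute[OF assms(4) assms(2)] by simp
  also have "\<dots> = commutator G x z" using assms(1-3) by (simp add: m_assoc)
  finally have "y \<otimes> commutator G x z \<otimes> inv y = commutator G x z" .
  then show ?thesis using assms(1-3) by (simp add: commutator_mult_right)
qed

end

lemma (in group_hom) hom_commutator:
  "x \<in> carrier G \<Longrightarrow> y \<in> carrier G \<Longrightarrow> h (commutator G x y) = commutator H (h x) (h y)"
  by (simp add: commutator_def)

context group begin

lemma lower_central_subset: "lower_central G n \<subseteq> carrier G"
proof (induction n)
  case (Suc n)
  show ?case unfolding lower_central_Suc
    by (rule generate_incl) (use Suc in auto)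
qed simp

lemma lower_central_carrier: "y \<in> lower_central G n \<Longrightarrow> y \<in> carrier G"
  using lower_central_subset by blast

lemma subgroup_lower_central: "subgroup (lower_central G n) G"
proof (cases n)
  case (Suc m)
  show ?thesis unfolding Suc lower_central_Suc
    by (rule generate_is_subgroup) (auto dest: lower_central_carrier)
qed (simp add: subgroup_self)

lemma commutator_in_lower_central:
  "x \<in> carrier G \<Longrightarrow> y \<in> lower_central G n \<Longrightarrow> commutator G x y \<in> lower_central G (Suc n)"
  unfolding lower_central_Suc by (rule generate.incl) blast

lemma commutator_in_lower_central':
  assumes "x \<in> carrier G" "y \<in> lower_central G n"
  shows "commutator G y x \<in> lower_central G (Suc n)"
  using subgroup.m_inv_closed[OF subgroup_lower_central commutator_in_lower_central[OF assms]]
    assms lower_central_carrier by (simp add: inv_commutator)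

lemma normal_lower_central: "lower_central G n \<lhd> G"
proof (induction n)
  case (Suc n)
  show ?case unfolding lower_central_Suc
  proof (rule normal_generateI)
    show "{commutator G x y | x y. x \<in> carrier G \<and> y \<in> lower_central G n} \<subseteq> carrier G"
      by (auto dest: lower_central_carrier)
  next
    fix h g
    assume "h \<in> {commutator G x y | x y. x \<in> carrier G \<and> y \<in> lower_central G n}"
      and g: "g \<in> carrier G"
    then obtain x y where x: "x \<in> carrier G" and y: "y \<in> lower_central G n"
      and h: "h = commutator G x y" by blast
    have "g \<otimes> y \<otimes> inv g \<in> lower_central G n"
      using Suc y g by (simp add: normal.inv_op_closed2)
    moreover have "g \<otimes> h \<otimes> inv g = commutator G (g \<otimes> x \<otimes> inv g) (g \<otimes> y \<otimes> inv g)"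
      using x y g lower_central_carrier[OF y]
      by (simp add: h commutator_def m_assoc inv_mult_group r_inv l_inv)
    ultimately show "g \<otimes> h \<otimes> inv g \<in> {commutator G x y | x y. x \<in> carrier G \<and> y \<in> lower_central G n}"
      using x g by blast
  qed
qed (simp add: normal_self)

lemma lower_central_Suc_subset: "lower_central G (Suc n) \<subseteq> lower_central G n"
  unfolding lower_central_Suc
proof (rule generate_subgroup_incl[OF _ subgroup_lower_central], clarify)
  fix x y assume x: "x \<in> carrier G" and y: "y \<in> lower_central G n"
  have "x \<otimes> y \<otimes> inv x \<in> lower_central G n" by (rule normal.inv_op_closed2[OF normal_lower_central x y])
  then show "commutator G x y \<in> lower_central G n"
    unfolding commutator_def
    by (rule subgroup.m_closed[OF subgroup_lower_central _ subgroup.m_inv_closed[OF subgroup_lower_central y]])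
qed

lemma lower_central_one_eq_derived: "lower_central G (Suc 0) = derived G (carrier G)"
  by (simp add: lower_central.simps derived_def)

lemma endo_image_lower_central:
  assumes "f \<in> hom G G" shows "f ` lower_central G n \<subseteq> lower_central G n"
proof (induction n)
  case 0 then show ?case using assms by (auto simp: hom_def)
next
  case (Suc n)
  interpret f: group_hom G G f using assms by unfold_locales
  let ?C = "{commutator G x y | x y. x \<in> carrier G \<and> y \<in> lower_central G n}"
  have "f ` generate G ?C = generate G (f ` ?C)"
    by (rule f.generate_img[symmetric]) (auto dest: lower_central_carrier)
  also have "\<dots> \<subseteq> generate G ?C"
  proof (rule mono_generate, rule subsetI)
    fix z assume "z \<in> f ` ?C"
    then obtain x y where x: "x \<in> carrier G" and y: "y \<in> lower_central G n"
      and z: "z = f (commutator G x y)" by blast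
    have "z = commutator G (f x) (f y)"
      using x lower_central_carrier[OF y] by (simp add: z f.hom_commutator)
    moreover have "f x \<in> carrier G" "f y \<in> lower_central G n" using x y Suc by auto
    ultimately show "z \<in> ?C" by blast
  qed
  finally show ?case unfolding lower_central_Suc .
qed

lemma conj_mem_mod_lower_central:
  assumes W: "subgroup W G" and "lower_central G (Suc m) \<subseteq> W"
    and w: "w \<in> W" "w \<in> lower_central G m" and x: "x \<in> carrier G"
  shows "x \<otimes> w \<otimes> inv x \<in> W"
proof -
  have wc: "w \<in> carrier G" using w(2) by (rule lower_central_carrier)
  have "commutator G (inv w) x \<in> lower_central G (Suc m)"
    by (rule commutator_in_lower_central'[OF x subgroup.m_inv_closed[OF subgroup_lower_central w(2)]])
  then have "w \<otimes> commutator G (inv w) x \<in> W"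
    using assms(2) subgroup.m_closed[OF W w(1)] by blast
  moreover have "x \<otimes> w \<otimes> inv x = w \<otimes> commutator G (inv w) x"
    using wc x by (simp add: commutator_def m_assoc)
  ultimately show ?thesis by (simp only:)
qed

end

section \<open>Torsion in finitely generated abelian groups\<close>

definition torsion_mod :: "('a, 'b) monoid_scheme \<Rightarrow> 'a set \<Rightarrow> 'a \<Rightarrow> bool" where
  "torsion_mod G H x \<longleftrightarrow> (\<exists>m::nat. m > 0 \<and> x [^]\<^bsub>G\<^esub> m \<in> H)"

lemma torsion_modI: "m > 0 \<Longrightarrow> x [^]\<^bsub>G\<^esub> (m::nat) \<in> H \<Longrightarrow> torsion_mod G H x"
  unfolding torsion_mod_def by blast

lemma torsion_modE:
  assumes "torsion_mod G H x" obtains m :: nat where "m > 0" "x [^]\<^bsub>G\<^esub> m \<in> H"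
  using assms unfolding torsion_mod_def by blast

context group begin

lemma subgroup_nat_pow_closed: "subgroup M G \<Longrightarrow> h \<in> M \<Longrightarrow> h [^] (n::nat) \<in> M"
  using subgroup_int_pow_closed[of M h "int n"] by (simp add: int_pow_int)

lemma torsion_mod_one_iff: "torsion_mod G {\<one>} x \<longleftrightarrow> (\<exists>m::nat. m > 0 \<and> x [^] m = \<one>)"
  by (simp add: torsion_mod_def)

lemma torsion_mult_commuting:
  assumes "x \<in> carrier G" "y \<in> carrier G" "x \<otimes> y = y \<otimes> x"
    and "torsion_mod G {\<one>} x" "torsion_mod G {\<one>} y"
  shows "torsion_mod G {\<one>} (x \<otimes> y)"
proof -
  obtain m\<^sub>1 m\<^sub>2 :: nat where "m\<^sub>1 > 0" "x [^] m\<^sub>1 = \<one>" "m\<^sub>2 > 0" "y [^] m\<^sub>2 = \<one>"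
    using assms(4,5) by (auto simp: torsion_mod_one_iff)
  moreover have "(x \<otimes> y) [^] (m\<^sub>1 * m\<^sub>2) = x [^] (m\<^sub>1 * m\<^sub>2) \<otimes> y [^] (m\<^sub>1 * m\<^sub>2)"
    by (rule pow_mult_distrib[OF assms(3,1,2)])
  moreover have "\<dots> = (x [^] m\<^sub>1) [^] m\<^sub>2 \<otimes> (y [^] m\<^sub>2) [^] m\<^sub>1"
    using assms(1,2) by (simp add: nat_pow_pow mult.commute)
  ultimately show ?thesis by (auto simp: torsion_mod_one_iff intro!: exI[of _ "m\<^sub>1 * m\<^sub>2"])
qed

lemma torsion_inv:
  assumes "x \<in> carrier G" "torsion_mod G {\<one>} x" shows "torsion_mod G {\<one>} (inv x)"
  using assms by (auto simp: torsion_mod_one_iff nat_pow_inv)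

lemma subgroup_mult_int_pow:
  assumes M: "subgroup M G" and a: "a \<in> carrier G"
    and comm: "\<And>b j. b \<in> M \<Longrightarrow> a [^] (j::int) \<otimes> b = b \<otimes> a [^] j"
  shows "subgroup {b \<otimes> a [^] (j::int) | b j. b \<in> M} G"
proof (rule subgroupI)
  have "\<one> \<otimes> a [^] (0::int) \<in> {b \<otimes> a [^] (j::int) | b j. b \<in> M}"
    using subgroup.one_closed[OF M] by blast
  then show "{b \<otimes> a [^] (j::int) | b j. b \<in> M} \<noteq> {}" by blast
  show "{b \<otimes> a [^] (j::int) | b j. b \<in> M} \<subseteq> carrier G"
    using subgroup.mem_carrier[OF M] a by auto
next
  fix x assume "x \<in> {b \<otimes> a [^] (j::int) | b j. b \<in> M}"
  then obtain b j where b: "b \<in> M" and x: "x = b \<otimes> a [^] (j::int)" by blast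
  have bc: "b \<in> carrier G" using subgroup.mem_carrier[OF M b] .
  have "inv x = a [^] (- j) \<otimes> inv b"
    using bc a by (simp add: x inv_mult_group int_pow_neg)
  also have "\<dots> = inv b \<otimes> a [^] (- j)"
    using comm subgroup.m_inv_closed[OF M b] by blast
  finally show "inv x \<in> {b \<otimes> a [^] (j::int) | b j. b \<in> M}"
    using subgroup.m_inv_closed[OF M b] by blast
next
  fix x y assume "x \<in> {b \<otimes> a [^] (j::int) | b j. b \<in> M}" "y \<in> {b \<otimes> a [^] (j::int) | b j. b \<in> M}"
  then obtain b j b' j' where b: "b \<in> M" "b' \<in> M" and x: "x = b \<otimes> a [^] (j::int)"
    and y: "y = b' \<otimes> a [^] (j'::int)" by blast
  have bc: "b \<in> carrier G" "b' \<in> carrier G" using subgroup.mem_carrier[OF M] b by auto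
  have "x \<otimes> y = b \<otimes> (a [^] j \<otimes> b') \<otimes> a [^] j'"
    using bc a by (simp add: x y m_assoc)
  also have "\<dots> = (b \<otimes> b') \<otimes> a [^] (j + j')"
    using bc a comm[OF b(2)] by (simp add: m_assoc int_pow_mult)
  finally show "x \<otimes> y \<in> {b \<otimes> a [^] (j::int) | b j. b \<in> M}"
    using subgroup.m_closed[OF M b] by blast
qed

lemma generate_insert_subset_mult_int_pow:
  assumes a: "a \<in> carrier G" and F: "F \<subseteq> carrier G"
    and comm: "\<And>u v. u \<in> generate G (insert a F) \<Longrightarrow> v \<in> generate G (insert a F) \<Longrightarrow> u \<otimes> v = v \<otimes> u"
  shows "generate G (insert a F) \<subseteq> {b \<otimes> a [^] (j::int) | b j. b \<in> generate G F}"
proof (rule generate_subgroup_incl)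
  have M': "subgroup (generate G (insert a F)) G"
    by (rule generate_is_subgroup) (use a F in auto)
  have "a [^] j \<in> generate G (insert a F)" for j :: int
    by (rule subgroup_int_pow_closed[OF M']) (simp add: generate.incl)
  moreover have "generate G F \<subseteq> generate G (insert a F)"
    by (rule mono_generate) blast
  ultimately show "subgroup {b \<otimes> a [^] (j::int) | b j. b \<in> generate G F} G"
    using comm by (intro subgroup_mult_int_pow generate_is_subgroup a F) blast
  show "insert a F \<subseteq> {b \<otimes> a [^] (j::int) | b j. b \<in> generate G F}"
  proof
    fix x assume "x \<in> insert a F"
    then consider "x = a" | "x \<in> F" by blast
    then show "x \<in> {b \<otimes> a [^] (j::int) | b j. b \<in> generate G F}"
    proof cases
      case 1
      then have "x = \<one> \<otimes> a [^] (1::int)" using a by simp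
      then show ?thesis using generate.one[of G F] by blast
    next
      case 2
      then have "x = x \<otimes> a [^] (0::int)" using F by auto
      then show ?thesis using generate.incl[OF 2] by blast
    qed
  qed
qed

lemma finite_torsion_coset:
  assumes M': "subgroup M' G" and M: "subgroup M G" "M \<subseteq> M'"
    and comm: "\<And>u v. u \<in> M' \<Longrightarrow> v \<in> M' \<Longrightarrow> u \<otimes> v = v \<otimes> u"
    and fin: "finite {x \<in> M. torsion_mod G {\<one>} x}" and c: "c \<in> carrier G"
  shows "finite {x \<in> M'. torsion_mod G {\<one>} x \<and> (\<exists>b\<in>M. x = b \<otimes> c)}"
proof (cases "{x \<in> M'. torsion_mod G {\<one>} x \<and> (\<exists>b\<in>M. x = b \<otimes> c)} = {}")
  case False
  then obtain x\<^sub>0 b\<^sub>0 where x\<^sub>0: "x\<^sub>0 \<in> M'" "torsion_mod G {\<one>} x\<^sub>0" and b\<^sub>0: "b\<^sub>0 \<in> M" "x\<^sub>0 = b\<^sub>0 \<otimes> c"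
    by blast
  have "{x \<in> M'. torsion_mod G {\<one>} x \<and> (\<exists>b\<in>M. x = b \<otimes> c)} \<subseteq> (\<lambda>t. t \<otimes> x\<^sub>0) ` {x \<in> M. torsion_mod G {\<one>} x}"
  proof
    fix x assume "x \<in> {x \<in> M'. torsion_mod G {\<one>} x \<and> (\<exists>b\<in>M. x = b \<otimes> c)}"
    then obtain b where x: "x \<in> M'" "torsion_mod G {\<one>} x" and b: "b \<in> M"
      and xb: "x = b \<otimes> c" by blast
    have carr: "b \<in> carrier G" "b\<^sub>0 \<in> carrier G" "x\<^sub>0 \<in> carrier G"
      using subgroup.mem_carrier[OF M(1) b] subgroup.mem_carrier[OF M(1) b\<^sub>0(1)]
        subgroup.mem_carrier[OF M' x\<^sub>0(1)] by auto
    have "x \<otimes> inv x\<^sub>0 = b \<otimes> inv b\<^sub>0"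
      using carr c by (simp add: xb b\<^sub>0(2) inv_mult_group m_assoc)
    then have "x \<otimes> inv x\<^sub>0 \<in> M"
      using subgroup.m_closed[OF M(1) b subgroup.m_inv_closed[OF M(1) b\<^sub>0(1)]] by simp
    moreover have "torsion_mod G {\<one>} (x \<otimes> inv x\<^sub>0)"
      using carr c x x\<^sub>0 comm subgroup.m_inv_closed[OF M'] xb
      by (intro torsion_mult_commuting torsion_inv) auto
    moreover have "x = (x \<otimes> inv x\<^sub>0) \<otimes> x\<^sub>0"
      using carr c by (simp add: xb m_assoc)
    ultimately show "x \<in> (\<lambda>t. t \<otimes> x\<^sub>0) ` {x \<in> M. torsion_mod G {\<one>} x}" by blast
  qed
  then show ?thesis using finite_subset fin by blast
qed (simp only: finite.emptyI)

end

context group begin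

lemma nat_abs_pow_in_subgroup:
  assumes M: "subgroup M G" and a: "a \<in> carrier G" and k: "a [^] (k::int) \<in> M"
  shows "a [^] nat \<bar>k\<bar> \<in> M"
proof (cases "k \<ge> 0")
  case True
  then show ?thesis using k by (simp add: pow_nat)
next
  case False
  have "a [^] (- k) = inv (a [^] k)" using a by (simp add: int_pow_neg)
  then have "a [^] (- k) \<in> M" using subgroup.m_inv_closed[OF M k] by simp
  then show ?thesis using False by (simp add: pow_nat)
qed

lemma finite_torsion_generate_insert_of_pow:
  assumes a: "a \<in> carrier G" and F: "F \<subseteq> carrier G"
    and comm: "\<And>u v. u \<in> generate G (insert a F) \<Longrightarrow> v \<in> generate G (insert a F) \<Longrightarrow> u \<otimes> v = v \<otimes> u"
    and fin: "finite {x \<in> generate G F. torsion_mod G {\<one>} x}"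
    and e: "(e::nat) > 0" "a [^] e \<in> generate G F"
  shows "finite {x \<in> generate G (insert a F). torsion_mod G {\<one>} x}"
proof -
  let ?M = "generate G F" and ?M' = "generate G (insert a F)"
  let ?T = "\<lambda>r::nat. {x \<in> ?M'. torsion_mod G {\<one>} x \<and> (\<exists>b\<in>?M. x = b \<otimes> a [^] r)}"
  have M: "subgroup ?M G" by (rule generate_is_subgroup[OF F])
  have M': "subgroup ?M' G" by (rule generate_is_subgroup) (use a F in auto)
  have "{x \<in> ?M'. torsion_mod G {\<one>} x} \<subseteq> (\<Union>r<e. ?T r)"
  proof clarify
    fix x assume x: "x \<in> ?M'" "torsion_mod G {\<one>} x"
    then obtain b j where b: "b \<in> ?M" and xb: "x = b \<otimes> a [^] (j::int)"
      using generate_insert_subset_mult_int_pow[OF a F comm] by blast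
    define q r where "q = j div int e" and "r = j mod int e"
    have r: "0 \<le> r" "r < int e" using e(1) by (simp_all add: r_def)
    have "a [^] j = a [^] (int e * q + r)"
      by (simp add: q_def r_def)
    also have "\<dots> = (a [^] int e) [^] q \<otimes> a [^] r"
      using a by (simp add: int_pow_mult int_pow_pow)
    also have "\<dots> = (a [^] e) [^] q \<otimes> a [^] nat r"
      using r by (simp add: int_pow_int pow_nat)
    finally have "x = (b \<otimes> (a [^] e) [^] q) \<otimes> a [^] nat r"
      using a subgroup.mem_carrier[OF M b] e subgroup.mem_carrier[OF M e(2)] by (simp add: xb m_assoc)
    moreover have "b \<otimes> (a [^] e) [^] q \<in> ?M"
      by (rule subgroup.m_closed[OF M b subgroup_int_pow_closed[OF M e(2)]])
    ultimately show "x \<in> (\<Union>r<e. ?T r)"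
      using x r by (intro UN_I[of "nat r"]) auto
  qed
  moreover have "finite (?T r)" for r
    by (rule finite_torsion_coset[OF M' M mono_generate comm fin]) (use a in auto)
  ultimately show ?thesis by (meson finite_UN_I finite_lessThan finite_subset)
qed

lemma torsion_generate_insert_of_no_pow:
  assumes a: "a \<in> carrier G" and F: "F \<subseteq> carrier G"
    and comm: "\<And>u v. u \<in> generate G (insert a F) \<Longrightarrow> v \<in> generate G (insert a F) \<Longrightarrow> u \<otimes> v = v \<otimes> u"
    and no_pow: "\<And>e::nat. e > 0 \<Longrightarrow> a [^] e \<notin> generate G F"
  shows "{x \<in> generate G (insert a F). torsion_mod G {\<one>} x} \<subseteq> {x \<in> generate G F. torsion_mod G {\<one>} x}"
proof clarify
  let ?M = "generate G F" and ?M' = "generate G (insert a F)"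
  have M: "subgroup ?M G" by (rule generate_is_subgroup[OF F])
  have M': "subgroup ?M' G" by (rule generate_is_subgroup) (use a F in auto)
  fix x assume x: "x \<in> ?M'" "torsion_mod G {\<one>} x"
  then obtain m :: nat where m: "m > 0" "x [^] m = \<one>" by (auto simp: torsion_mod_one_iff)
  obtain b j where b: "b \<in> ?M" and xb: "x = b \<otimes> a [^] (j::int)"
    using generate_insert_subset_mult_int_pow[OF a F comm] x(1) by blast
  have bc: "b \<in> carrier G" by (rule subgroup.mem_carrier[OF M b])
  have "a [^] j \<in> ?M'" by (rule subgroup_int_pow_closed[OF M']) (simp add: generate.incl)
  moreover have "b \<in> ?M'" using b mono_generate[of F "insert a F"] by blast
  ultimately have "x [^] m = b [^] m \<otimes> (a [^] j) [^] m"
    using comm bc a by (simp add: xb pow_mult_distrib)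
  also have "(a [^] j) [^] m = a [^] (j * int m)"
    using a by (simp add: int_pow_pow flip: int_pow_int)
  finally have eq: "b [^] m \<otimes> a [^] (j * int m) = \<one>"
    using m by simp
  have "a [^] (j * int m) = inv (b [^] m) \<otimes> (b [^] m \<otimes> a [^] (j * int m))"
    using bc a by simp
  then have "a [^] (j * int m) = inv (b [^] m)"
    using eq bc by simp
  then have "a [^] (j * int m) \<in> ?M"
    using subgroup.m_inv_closed[OF M] subgroup_nat_pow_closed[OF M b] by simp
  then have "a [^] nat \<bar>j * int m\<bar> \<in> ?M" by (rule nat_abs_pow_in_subgroup[OF M a])
  moreover have "nat \<bar>j * int m\<bar> > 0" if "j \<noteq> 0" using that m(1) by simp
  ultimately have "j = 0" using no_pow by blast
  then show "x \<in> ?M" using xb b bc by simp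
qed

lemma finite_torsion_generate:
  assumes "finite F" "F \<subseteq> carrier G"
    and "\<And>u v. u \<in> generate G F \<Longrightarrow> v \<in> generate G F \<Longrightarrow> u \<otimes> v = v \<otimes> u"
  shows "finite {x \<in> generate G F. torsion_mod G {\<one>} x}"
  using assms
proof (induction F rule: finite_induct)
  case empty
  then show ?case using generate_empty by (simp add: finite_subset[of _ "{\<one>}"])
next
  case (insert a F)
  have a: "a \<in> carrier G" and F: "F \<subseteq> carrier G" using insert.prems by auto
  have "finite {x \<in> generate G F. torsion_mod G {\<one>} x}"
    using insert.IH F insert.prems(2) mono_generate[of F "insert a F"] by blast
  then show ?case
    using finite_torsion_generate_insert_of_pow[OF a F insert.prems(2)]
      torsion_generate_insert_of_no_pow[OF a F insert.prems(2)] finite_subset by blast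
qed

end

lemma finite_image_representatives:
  assumes "finite (f ` A)"
  obtains R where "finite R" "R \<subseteq> A" "\<And>x. x \<in> A \<Longrightarrow> \<exists>r\<in>R. f r = f x"
proof
  define rep where "rep q = (SOME x. x \<in> A \<and> f x = q)" for q
  have rep: "rep (f x) \<in> A \<and> f (rep (f x)) = f x" if "x \<in> A" for x
    unfolding rep_def by (rule someI[of _ x]) (use that in simp)
  show "finite (rep ` f ` A)" using assms by simp
  show "rep ` f ` A \<subseteq> A" using rep by blast
  show "\<exists>r\<in>rep ` f ` A. f r = f x" if "x \<in> A" for x
    using rep[OF that] that by blast
qed

context normal begin

lemma group_hom_r_coset: "group_hom G (G Mod H) (\<lambda>x. H #> x)"
  by (rule group_hom.intro[OF is_group factorgroup_is_group])
    (rule group_hom_axioms.intro[OF r_coset_hom_Mod])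

lemma r_coset_eq_self_iff: "x \<in> carrier G \<Longrightarrow> H #> x = H \<longleftrightarrow> x \<in> H"
  using rcos_self[OF _ subgroup_axioms] rcos_const[OF is_group] by auto

lemma r_coset_eq_iff:
  assumes "x \<in> carrier G" "y \<in> carrier G" shows "H #> x = H #> y \<longleftrightarrow> x \<otimes> inv y \<in> H"
proof
  assume "H #> x = H #> y"
  then have "x \<in> H #> y" using rcos_self[OF assms(1) subgroup_axioms] by simp
  then show "x \<otimes> inv y \<in> H" using rcos_module[OF is_group assms(2,1)] by simp
next
  assume "x \<otimes> inv y \<in> H"
  then have "x \<in> H #> y" using rcos_module[OF is_group assms(2,1)] by simp
  then show "H #> x = H #> y" using repr_independence[OF _ assms(2) subgroup_axioms] by simp
qed

lemma torsion_mod_iff_FactGroup: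
  assumes "x \<in> carrier G"
  shows "torsion_mod G H x \<longleftrightarrow> torsion_mod (G Mod H) {\<one>\<^bsub>G Mod H\<^esub>} (H #> x)"
  using assms r_coset_eq_self_iff FactGroup_pow by (simp add: torsion_mod_def)

lemma r_coset_generate_union:
  assumes F: "F \<subseteq> carrier G"
  shows "(\<lambda>x. H #> x) ` generate G (F \<union> H) = generate (G Mod H) ((\<lambda>x. H #> x) ` F)"
proof -
  interpret p: group_hom G "G Mod H" "\<lambda>x. H #> x" by (rule group_hom_r_coset)
  have "(\<lambda>x. H #> x) ` generate G (F \<union> H) = generate (G Mod H) ((\<lambda>x. H #> x) ` (F \<union> H))"
    by (rule p.generate_img[symmetric]) (use F subset in blast)
  also have "\<dots> = generate (G Mod H) ((\<lambda>x. H #> x) ` F)"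
  proof
    show "generate (G Mod H) ((\<lambda>x. H #> x) ` (F \<union> H)) \<subseteq> generate (G Mod H) ((\<lambda>x. H #> x) ` F)"
    proof (rule p.H.generate_subgroup_incl)
      show "subgroup (generate (G Mod H) ((\<lambda>x. H #> x) ` F)) (G Mod H)"
        by (rule p.H.generate_is_subgroup) (use F in auto)
      show "(\<lambda>x. H #> x) ` (F \<union> H) \<subseteq> generate (G Mod H) ((\<lambda>x. H #> x) ` F)"
        using generate.incl[of _ "(\<lambda>x. H #> x) ` F" "G Mod H"] generate.one[of "G Mod H"]
          rcos_const[OF is_group] by (auto simp: one_FactGroup)
    qed
    show "generate (G Mod H) ((\<lambda>x. H #> x) ` F) \<subseteq> generate (G Mod H) ((\<lambda>x. H #> x) ` (F \<union> H))"
      by (rule p.H.mono_generate) blast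
  qed
  finally show ?thesis .
qed

lemma finite_torsion_mod_image:
  assumes F: "finite F" "F \<subseteq> carrier G"
    and comm: "\<And>a b. a \<in> generate G (F \<union> H) \<Longrightarrow> b \<in> generate G (F \<union> H) \<Longrightarrow> commutator G a b \<in> H"
  shows "finite ((\<lambda>x. H #> x) ` {x \<in> generate G (F \<union> H). torsion_mod G H x})"
proof -
  interpret p: group_hom G "G Mod H" "\<lambda>x. H #> x" by (rule group_hom_r_coset)
  let ?K = "generate (G Mod H) ((\<lambda>x. H #> x) ` F)"
  have M: "x \<in> generate G (F \<union> H) \<Longrightarrow> x \<in> carrier G" for x
    using generate_incl[of "F \<union> H"] F subset by blast
  have comm_K: "u \<otimes>\<^bsub>G Mod H\<^esub> v = v \<otimes>\<^bsub>G Mod H\<^esub> u" if "u \<in> ?K" "v \<in> ?K" for u v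
  proof -
    have "u \<in> (\<lambda>x. H #> x) ` generate G (F \<union> H)" "v \<in> (\<lambda>x. H #> x) ` generate G (F \<union> H)"
      using that r_coset_generate_union[OF F(2)] by simp_all
    then obtain a b where ab: "a \<in> generate G (F \<union> H)" "b \<in> generate G (F \<union> H)"
      and uv: "u = H #> a" "v = H #> b" by blast
    have carr: "a \<in> carrier G" "b \<in> carrier G" using M ab by auto
    have "(a \<otimes> b) \<otimes> inv (b \<otimes> a) = commutator G a b"
      using carr by (simp add: commutator_def m_assoc inv_mult_group)
    then have "(a \<otimes> b) \<otimes> inv (b \<otimes> a) \<in> H" using comm[OF ab] by simp
    then have "H #> (a \<otimes> b) = H #> (b \<otimes> a)"
      using r_coset_eq_iff[of "a \<otimes> b" "b \<otimes> a"] carr by blast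
    then show ?thesis
      unfolding uv mult_FactGroup rcos_sum[OF carr] rcos_sum[OF carr(2,1)] .
  qed
  have "(\<lambda>x. H #> x) ` F \<subseteq> carrier (G Mod H)" using F(2) by auto
  then have "finite {q \<in> ?K. torsion_mod (G Mod H) {\<one>\<^bsub>G Mod H\<^esub>} q}"
    using p.H.finite_torsion_generate[OF finite_imageI[OF F(1)] _ comm_K] by blast
  moreover have "(\<lambda>x. H #> x) ` {x \<in> generate G (F \<union> H). torsion_mod G H x}
      \<subseteq> {q \<in> ?K. torsion_mod (G Mod H) {\<one>\<^bsub>G Mod H\<^esub>} q}"
    using r_coset_generate_union[OF F(2)] torsion_mod_iff_FactGroup M by blast
  ultimately show ?thesis by (rule finite_subset[rotated])
qed

lemma finite_torsion_mod_representatives: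
  assumes F: "finite F" "F \<subseteq> carrier G"
    and comm: "\<And>a b. a \<in> generate G (F \<union> H) \<Longrightarrow> b \<in> generate G (F \<union> H) \<Longrightarrow> commutator G a b \<in> H"
  obtains R where "finite R" "R \<subseteq> {x \<in> generate G (F \<union> H). torsion_mod G H x}"
    "\<And>x. x \<in> generate G (F \<union> H) \<Longrightarrow> torsion_mod G H x \<Longrightarrow> \<exists>r\<in>R. \<exists>h\<in>H. x = h \<otimes> r"
proof -
  obtain R where R: "finite R" "R \<subseteq> {x \<in> generate G (F \<union> H). torsion_mod G H x}"
    and rep: "\<And>x. x \<in> {x \<in> generate G (F \<union> H). torsion_mod G H x} \<Longrightarrow> \<exists>r\<in>R. H #> r = H #> x"
    using finite_image_representatives[OF finite_torsion_mod_image[OF F comm]] by blast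
  have M: "x \<in> generate G (F \<union> H) \<Longrightarrow> x \<in> carrier G" for x
    using generate_incl[of "F \<union> H"] F subset by blast
  have "\<exists>r\<in>R. \<exists>h\<in>H. x = h \<otimes> r" if x: "x \<in> generate G (F \<union> H)" "torsion_mod G H x" for x
  proof -
    obtain r where r: "r \<in> R" "H #> r = H #> x" using rep x by blast
    have carr: "x \<in> carrier G" "r \<in> carrier G" using M x r R(2) by auto
    then have "x \<otimes> inv r \<in> H" using r r_coset_eq_iff by metis
    moreover have "x = (x \<otimes> inv r) \<otimes> r" using carr by (simp add: m_assoc)
    ultimately show ?thesis using r by blast
  qed
  then show ?thesis using that R by blast
qed

end

section \<open>Generators of the layers of the lower central series\<close>

primrec iterated_commutators :: "('a, 'b) monoid_scheme \<Rightarrow> 'a set \<Rightarrow> nat \<Rightarrow> 'a set" where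
  "iterated_commutators G S 0 = S"
| "iterated_commutators G S (Suc n) =
     (\<lambda>(s, y). commutator G s y) ` (S \<times> iterated_commutators G S n)"

context group begin

lemma finite_iterated_commutators: "finite S \<Longrightarrow> finite (iterated_commutators G S n)"
  by (induction n) auto

lemma iterated_commutators_subset:
  "S \<subseteq> carrier G \<Longrightarrow> iterated_commutators G S n \<subseteq> lower_central G n"
  by (induction n) (auto intro!: commutator_in_lower_central)

lemma subgroup_generate_iterated:
  "S \<subseteq> carrier G \<Longrightarrow> subgroup (generate G (iterated_commutators G S n \<union> lower_central G (Suc n))) G"
  using iterated_commutators_subset lower_central_subset by (intro generate_is_subgroup) blast

lemma generate_iterated_subset_lower_central:
  "S \<subseteq> carrier G \<Longrightarrow> generate G (iterated_commutators G S n \<union> lower_central G (Suc n)) \<subseteq> lower_central G n"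
  using iterated_commutators_subset lower_central_Suc_subset
  by (intro generate_subgroup_incl[OF _ subgroup_lower_central]) blast

lemma commutator_gen_iterated_mem:
  assumes S: "S \<subseteq> carrier G" and s: "s \<in> S"
    and h: "h \<in> iterated_commutators G S n \<union> lower_central G (Suc n)"
  shows "commutator G s h \<in> generate G (iterated_commutators G S (Suc n) \<union> lower_central G (Suc (Suc n)))"
proof (cases "h \<in> iterated_commutators G S n")
  case True
  then have "commutator G s h \<in> iterated_commutators G S (Suc n)" using s by force
  then show ?thesis by (intro generate.incl UnI1)
next
  case False
  then have "commutator G s h \<in> lower_central G (Suc (Suc n))"
    using h s S commutator_in_lower_central by blast
  then show ?thesis by (intro generate.incl UnI2)
qed

lemma commutator_gen_mem_generate_iterated:
  assumes S: "S \<subseteq> carrier G" and s: "s \<in> S"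
    and y: "y \<in> generate G (iterated_commutators G S n \<union> lower_central G (Suc n))"
  shows "commutator G s y \<in> generate G (iterated_commutators G S (Suc n) \<union> lower_central G (Suc (Suc n)))"
proof -
  let ?W = "generate G (iterated_commutators G S (Suc n) \<union> lower_central G (Suc (Suc n)))"
  note W = subgroup_generate_iterated[OF S, of "Suc n"]
  have LW: "lower_central G (Suc (Suc n)) \<subseteq> ?W" by (auto intro: generate.incl)
  have sc: "s \<in> carrier G" using s S by blast
  note V = generate_iterated_subset_lower_central[OF S, of n]
  show ?thesis using y
  proof (induction rule: generate.induct)
    case one
    show ?case using sc generate.one by simp
  next
    case (incl h)
    then show ?case by (rule commutator_gen_iterated_mem[OF S s])
  next
    case (inv h)
    have h: "h \<in> lower_central G n" "h \<in> carrier G"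
      using V generate.incl[OF inv] lower_central_carrier by blast+
    have "inv (commutator G s h) \<in> ?W"
      by (rule subgroup.m_inv_closed[OF W commutator_gen_iterated_mem[OF S s inv]])
    moreover have "inv (commutator G s h) \<in> lower_central G (Suc n)"
      using h sc by (simp add: inv_commutator commutator_in_lower_central')
    ultimately have "inv h \<otimes> inv (commutator G s h) \<otimes> inv (inv h) \<in> ?W"
      using h by (intro conj_mem_mod_lower_central[OF W LW]) auto
    then show ?case using h sc by (simp add: commutator_inv_right)
  next
    case (eng h\<^sub>1 h\<^sub>2)
    have h: "h\<^sub>1 \<in> carrier G" "h\<^sub>2 \<in> lower_central G n"
      using eng.hyps V lower_central_carrier by blast+
    have "h\<^sub>1 \<otimes> commutator G s h\<^sub>2 \<otimes> inv h\<^sub>1 \<in> ?W"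
      by (rule conj_mem_mod_lower_central[OF W LW eng.IH(2) commutator_in_lower_central[OF sc h(2)] h(1)])
    then show ?case
      using subgroup.m_closed[OF W eng.IH(1)] sc h lower_central_carrier
      by (simp add: commutator_mult_right)
  qed
qed

lemma commutator_mem_generate_iterated:
  assumes S: "S \<subseteq> carrier G" "generate G S = carrier G"
    and IH: "lower_central G n \<subseteq> generate G (iterated_commutators G S n \<union> lower_central G (Suc n))"
    and x: "x \<in> carrier G" and y: "y \<in> lower_central G n"
  shows "commutator G x y \<in> generate G (iterated_commutators G S (Suc n) \<union> lower_central G (Suc (Suc n)))"
proof -
  let ?W = "generate G (iterated_commutators G S (Suc n) \<union> lower_central G (Suc (Suc n)))"
  note W = subgroup_generate_iterated[OF S(1), of "Suc n"]
  have LW: "lower_central G (Suc (Suc n)) \<subseteq> ?W" by (auto intro: generate.incl)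
  have yc: "y \<in> carrier G" using y by (rule lower_central_carrier)
  have "x \<in> generate G S" using x S(2) by simp
  then show ?thesis
  proof (induction rule: generate.induct)
    case one
    then show ?case using yc generate.one by simp
  next
    case (incl s)
    then show ?case using commutator_gen_mem_generate_iterated[OF S(1) incl] IH y by blast
  next
    case (inv s)
    have sc: "s \<in> carrier G" using inv S(1) by blast
    have "y \<in> generate G (iterated_commutators G S n \<union> lower_central G (Suc n))" using IH y by blast
    then have "inv (commutator G s y) \<in> ?W"
      by (rule subgroup.m_inv_closed[OF W commutator_gen_mem_generate_iterated[OF S(1) inv]])
    then have "commutator G y s \<in> ?W" using sc yc by (simp add: inv_commutator)
    then have "inv s \<otimes> commutator G y s \<otimes> inv (inv s) \<in> ?W"
      using sc by (intro conj_mem_mod_lower_central[OF W LW _ commutator_in_lower_central'[OF sc y]]) auto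
    then show ?case using sc yc by (simp add: commutator_inv_left)
  next
    case (eng a b)
    have ab: "a \<in> carrier G" "b \<in> carrier G" using eng.hyps S(2) by auto
    have "a \<otimes> commutator G b y \<otimes> inv a \<in> ?W"
      by (rule conj_mem_mod_lower_central[OF W LW eng.IH(2) commutator_in_lower_central[OF ab(2) y] ab(1)])
    then show ?case
      using subgroup.m_closed[OF W _ eng.IH(1)] ab yc by (simp add: commutator_mult_left)
  qed
qed

lemma lower_central_subset_generate_iterated:
  assumes S: "S \<subseteq> carrier G" "generate G S = carrier G"
  shows "lower_central G n \<subseteq> generate G (iterated_commutators G S n \<union> lower_central G (Suc n))"
proof (induction n)
  case 0
  have "generate G S \<subseteq> generate G (S \<union> lower_central G (Suc 0))" by (rule mono_generate) blast
  then show ?case using S(2) by simp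
next
  case (Suc n)
  have "lower_central G (Suc n) = generate G {commutator G x y | x y. x \<in> carrier G \<and> y \<in> lower_central G n}"
    by (rule lower_central_Suc)
  also have "\<dots> \<subseteq> generate G (iterated_commutators G S (Suc n) \<union> lower_central G (Suc (Suc n)))"
    using commutator_mem_generate_iterated[OF S Suc] iterated_commutators_subset[OF S(1)] lower_central_subset
    by (intro generate_subgroup_incl generate_is_subgroup) blast+
  finally show ?case .
qed

end

section \<open>Unipotence on the layers of the lower central series\<close>

locale group_endo = group G for G (structure) +
  fixes \<phi> :: "'a \<Rightarrow> 'a"
  assumes endo: "\<phi> \<in> hom G G"
begin

lemma funpow_endo: "\<phi> ^^ n \<in> hom G G"
  by (induction n) (use endo in \<open>auto simp: hom_def Pi_def\<close>)

sublocale E: group_hom G G \<phi>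
  using endo by unfold_locales

lemma group_hom_funpow: "group_hom G G (\<phi> ^^ n)"
  using funpow_endo by unfold_locales

lemma funpow_closed [simp]: "x \<in> carrier G \<Longrightarrow> (\<phi> ^^ n) x \<in> carrier G"
  using funpow_endo by (auto simp: hom_def)

lemma funpow_mult [simp]:
  "x \<in> carrier G \<Longrightarrow> y \<in> carrier G \<Longrightarrow> (\<phi> ^^ n) (x \<otimes> y) = (\<phi> ^^ n) x \<otimes> (\<phi> ^^ n) y"
  using funpow_endo by (auto simp: hom_def)

lemma funpow_inv [simp]: "x \<in> carrier G \<Longrightarrow> (\<phi> ^^ n) (inv x) = inv ((\<phi> ^^ n) x)"
  using group_hom.hom_inv[OF group_hom_funpow] .

lemma funpow_one [simp]: "(\<phi> ^^ n) \<one> = \<one>"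
  using group_hom.hom_one[OF group_hom_funpow] .

lemma endo_lower_central: "x \<in> lower_central G j \<Longrightarrow> \<phi> x \<in> lower_central G j"
  using endo_image_lower_central[OF endo] by blast

definition delta :: "'a \<Rightarrow> 'a" where "delta x = \<phi> x \<otimes> inv x"

lemma delta_closed [simp]: "x \<in> carrier G \<Longrightarrow> delta x \<in> carrier G"
  by (simp add: delta_def)

lemma funpow_delta_closed [simp]: "x \<in> carrier G \<Longrightarrow> (delta ^^ r) x \<in> carrier G"
  by (induction r) auto

lemma delta_one [simp]: "delta \<one> = \<one>"
  by (simp add: delta_def)

lemma funpow_delta_one [simp]: "(delta ^^ r) \<one> = \<one>"
  by (induction r) auto

lemma endo_eq_delta_mult: "x \<in> carrier G \<Longrightarrow> \<phi> x = delta x \<otimes> x"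
  by (simp add: delta_def m_assoc)

lemma delta_lower_central: "x \<in> lower_central G j \<Longrightarrow> delta x \<in> lower_central G j"
  unfolding delta_def using endo_lower_central subgroup.m_closed[OF subgroup_lower_central]
    subgroup.m_inv_closed[OF subgroup_lower_central] by blast

lemma funpow_delta_lower_central: "x \<in> lower_central G j \<Longrightarrow> (delta ^^ r) x \<in> lower_central G j"
  by (induction r) (auto intro: delta_lower_central)

end

(* Computations in G / gamma_(n+2), where the layer gamma_(n+1) becomes central and the
   commutator map gamma_1 x gamma_n -> gamma_(n+1) / gamma_(n+2) is bilinear. *)
locale lower_central_layer = group_endo +
  fixes n :: nat
begin

declare mult_FactGroup [simp del]

abbreviation "K\<^sub>2 \<equiv> lower_central G (Suc (Suc n))"
abbreviation "Q \<equiv> G Mod lower_central G (Suc (Suc n))"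
abbreviation "p \<equiv> r_coset G (lower_central G (Suc (Suc n)))"

sublocale K: normal K\<^sub>2 G
  by (rule normal_lower_central)

sublocale P: group_hom G Q p
  by (rule K.group_hom_r_coset)

lemma r_coset_carrier [simp]: "x \<in> carrier G \<Longrightarrow> p x \<in> carrier Q"
  by (rule P.hom_closed)

lemma central_r_coset: assumes z: "z \<in> lower_central G (Suc n)" shows "central Q (p z)"
proof -
  have zc: "z \<in> carrier G" using z by (rule lower_central_carrier)
  have "p z \<otimes>\<^bsub>Q\<^esub> g = g \<otimes>\<^bsub>Q\<^esub> p z" if g: "g \<in> carrier Q" for g
  proof -
    obtain x where x: "x \<in> carrier G" "g = p x" using g by (auto simp: carrier_FactGroup)
    have "p (commutator G x z) = \<one>\<^bsub>Q\<^esub>"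
      using commutator_in_lower_central[OF x(1) z] x zc by (simp add: K.r_coset_eq_self_iff)
    then have "commutator Q (p x) (p z) = \<one>\<^bsub>Q\<^esub>" using x zc by (simp add: P.hom_commutator)
    then show ?thesis using P.H.commutator_eq_one_iff x zc by simp
  qed
  then show ?thesis using zc by (simp add: central_def)
qed

lemma r_coset_delta_cong:
  assumes "x \<in> carrier G" "y \<in> carrier G" "p x = p y" shows "p (delta x) = p (delta y)"
proof -
  have "x \<otimes> inv y \<in> K\<^sub>2" using assms by (simp add: K.r_coset_eq_iff)
  then have "\<phi> (x \<otimes> inv y) \<in> K\<^sub>2" by (rule endo_lower_central)
  then have "p (\<phi> x) = p (\<phi> y)" using assms by (simp add: K.r_coset_eq_iff)
  then show ?thesis using assms by (simp add: delta_def)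
qed

lemma r_coset_funpow_delta_cong:
  "x \<in> carrier G \<Longrightarrow> y \<in> carrier G \<Longrightarrow> p x = p y \<Longrightarrow> p ((delta ^^ r) x) = p ((delta ^^ r) y)"
  by (induction r) (simp_all add: r_coset_delta_cong)

lemma r_coset_delta_mult:
  assumes u: "u \<in> lower_central G (Suc n)" and v: "v \<in> lower_central G (Suc n)"
  shows "p (delta (u \<otimes> v)) = p (delta u) \<otimes>\<^bsub>Q\<^esub> p (delta v)"
proof -
  have carr: "u \<in> carrier G" "v \<in> carrier G" using u v lower_central_carrier by blast+
  have "p (delta (u \<otimes> v)) = (p (\<phi> u) \<otimes>\<^bsub>Q\<^esub> p (\<phi> v)) \<otimes>\<^bsub>Q\<^esub> inv\<^bsub>Q\<^esub> (p u \<otimes>\<^bsub>Q\<^esub> p v)"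
    using carr by (simp add: delta_def)
  also have "\<dots> = (p (\<phi> u) \<otimes>\<^bsub>Q\<^esub> inv\<^bsub>Q\<^esub> (p u)) \<otimes>\<^bsub>Q\<^esub> (p (\<phi> v) \<otimes>\<^bsub>Q\<^esub> inv\<^bsub>Q\<^esub> (p v))"
    using u v endo_lower_central by (intro P.H.central_mult_inv_distrib central_r_coset)
  also have "\<dots> = p (delta u) \<otimes>\<^bsub>Q\<^esub> p (delta v)" using carr by (simp add: delta_def)
  finally show ?thesis .
qed

lemma r_coset_funpow_delta_mult:
  "u \<in> lower_central G (Suc n) \<Longrightarrow> v \<in> lower_central G (Suc n) \<Longrightarrow>
   p ((delta ^^ r) (u \<otimes> v)) = p ((delta ^^ r) u) \<otimes>\<^bsub>Q\<^esub> p ((delta ^^ r) v)"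
proof (induction r)
  case 0
  then show ?case using lower_central_carrier by simp
next
  case (Suc r)
  have L: "(delta ^^ r) u \<in> lower_central G (Suc n)" "(delta ^^ r) v \<in> lower_central G (Suc n)"
    using Suc.prems funpow_delta_lower_central by blast+
  have carr: "u \<in> carrier G" "v \<in> carrier G" using Suc.prems lower_central_carrier by blast+
  have "p ((delta ^^ r) (u \<otimes> v)) = p ((delta ^^ r) u \<otimes> (delta ^^ r) v)"
    using Suc.IH[OF Suc.prems] carr by simp
  then have "p (delta ((delta ^^ r) (u \<otimes> v))) = p (delta ((delta ^^ r) u \<otimes> (delta ^^ r) v))"
    using carr by (intro r_coset_delta_cong) simp_all
  also have "\<dots> = p (delta ((delta ^^ r) u)) \<otimes>\<^bsub>Q\<^esub> p (delta ((delta ^^ r) v))"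
    by (rule r_coset_delta_mult[OF L])
  finally show ?case by simp
qed

lemma r_coset_funpow_delta_pow:
  "u \<in> lower_central G (Suc n) \<Longrightarrow> p ((delta ^^ r) (u [^] (m::nat))) = p ((delta ^^ r) u) [^]\<^bsub>Q\<^esub> m"
proof (induction m)
  case (Suc m)
  have "u [^] m \<in> lower_central G (Suc n)" by (rule subgroup_nat_pow_closed[OF subgroup_lower_central Suc.prems])
  then show ?case
    using r_coset_funpow_delta_mult[of "u [^] m" u r] Suc by simp
qed simp

lemma r_coset_funpow_delta_inv:
  assumes u: "u \<in> lower_central G (Suc n)"
  shows "p ((delta ^^ r) (inv u)) = inv\<^bsub>Q\<^esub> (p ((delta ^^ r) u))"
proof -
  have c: "u \<in> carrier G" using u lower_central_carrier by blast
  have "inv u \<in> lower_central G (Suc n)" by (rule subgroup.m_inv_closed[OF subgroup_lower_central u])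
  then have "p ((delta ^^ r) (inv u)) \<otimes>\<^bsub>Q\<^esub> p ((delta ^^ r) u) = \<one>\<^bsub>Q\<^esub>"
    using r_coset_funpow_delta_mult[of "inv u" u r] u c by simp
  then show ?thesis using c by (intro P.H.inv_equality[symmetric]) simp_all
qed

definition delta_torsion :: "nat \<Rightarrow> 'a set" where
  "delta_torsion r = {z \<in> lower_central G (Suc n). torsion_mod G K\<^sub>2 ((delta ^^ r) z)}"

lemma torsion_mod_K2_iff: "x \<in> carrier G \<Longrightarrow> torsion_mod G K\<^sub>2 x \<longleftrightarrow> torsion_mod Q {\<one>\<^bsub>Q\<^esub>} (p x)"
  by (rule K.torsion_mod_iff_FactGroup)

lemma subgroup_delta_torsion: "subgroup (delta_torsion r) G"
proof (rule subgroupI)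
  show "delta_torsion r \<subseteq> carrier G" unfolding delta_torsion_def using lower_central_carrier by blast
  have "\<one> \<in> delta_torsion r"
    using subgroup.one_closed[OF subgroup_lower_central] subgroup.one_closed[OF K.subgroup_axioms]
    by (auto simp: delta_torsion_def intro!: torsion_modI[of 1])
  then show "delta_torsion r \<noteq> {}" by blast
next
  fix u assume "u \<in> delta_torsion r"
  then have u: "u \<in> lower_central G (Suc n)" "torsion_mod Q {\<one>\<^bsub>Q\<^esub>} (p ((delta ^^ r) u))"
    using lower_central_carrier by (auto simp: delta_torsion_def torsion_mod_K2_iff)
  have c: "u \<in> carrier G" using u lower_central_carrier by blast
  have "inv u \<in> lower_central G (Suc n)" by (rule subgroup.m_inv_closed[OF subgroup_lower_central u(1)])
  moreover have "torsion_mod Q {\<one>\<^bsub>Q\<^esub>} (p ((delta ^^ r) (inv u)))"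
    using P.H.torsion_inv[OF _ u(2)] c by (simp add: r_coset_funpow_delta_inv[OF u(1)])
  ultimately show "inv u \<in> delta_torsion r"
    using c by (simp add: delta_torsion_def torsion_mod_K2_iff)
next
  fix u v assume "u \<in> delta_torsion r" "v \<in> delta_torsion r"
  then have u: "u \<in> lower_central G (Suc n)" "torsion_mod Q {\<one>\<^bsub>Q\<^esub>} (p ((delta ^^ r) u))"
    and v: "v \<in> lower_central G (Suc n)" "torsion_mod Q {\<one>\<^bsub>Q\<^esub>} (p ((delta ^^ r) v))"
    using lower_central_carrier by (auto simp: delta_torsion_def torsion_mod_K2_iff)
  have c: "u \<in> carrier G" "v \<in> carrier G" using u v lower_central_carrier by blast+
  have "u \<otimes> v \<in> lower_central G (Suc n)" by (rule subgroup.m_closed[OF subgroup_lower_central u(1) v(1)])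
  moreover have "central Q (p ((delta ^^ r) u))"
    using u(1) by (intro central_r_coset funpow_delta_lower_central)
  then have comm: "p ((delta ^^ r) u) \<otimes>\<^bsub>Q\<^esub> p ((delta ^^ r) v) = p ((delta ^^ r) v) \<otimes>\<^bsub>Q\<^esub> p ((delta ^^ r) u)"
    by (rule P.H.central_commute) (intro r_coset_carrier funpow_delta_closed c(2))
  have "torsion_mod Q {\<one>\<^bsub>Q\<^esub>} (p ((delta ^^ r) u) \<otimes>\<^bsub>Q\<^esub> p ((delta ^^ r) v))"
    by (rule P.H.torsion_mult_commuting[OF _ _ comm u(2) v(2)]) (intro r_coset_carrier funpow_delta_closed c)+
  ultimately show "u \<otimes> v \<in> delta_torsion r"
    using c by (simp add: delta_torsion_def torsion_mod_K2_iff r_coset_funpow_delta_mult[OF u(1) v(1)])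
qed

lemma delta_torsion_Suc: assumes z: "z \<in> delta_torsion r" shows "z \<in> delta_torsion (Suc r)"
proof -
  let ?w = "(delta ^^ r) z"
  obtain m :: nat where m: "m > 0" "?w [^] m \<in> K\<^sub>2" and zL: "z \<in> lower_central G (Suc n)"
    using z by (auto simp: delta_torsion_def elim: torsion_modE)
  have wL: "?w \<in> lower_central G (Suc n)" using funpow_delta_lower_central zL by blast
  have wc: "?w \<in> carrier G" using wL lower_central_carrier by blast
  have "p (?w [^] m) = p \<one>"
    using m wc by (simp add: K.r_coset_eq_self_iff)
  then have "p (delta (?w [^] m)) = p (delta \<one>)" using wc by (intro r_coset_delta_cong) simp_all
  then have "p (delta ?w) [^]\<^bsub>Q\<^esub> m = \<one>\<^bsub>Q\<^esub>"
    using r_coset_funpow_delta_pow[OF wL, of 1 m] by simp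
  then have "torsion_mod Q {\<one>\<^bsub>Q\<^esub>} (p (delta ?w))"
    using m(1) by (intro torsion_modI[of m]) auto
  then have "torsion_mod G K\<^sub>2 ((delta ^^ Suc r) z)"
    using wc torsion_mod_K2_iff[of "delta ?w"] by simp
  then show ?thesis using zL by (simp add: delta_torsion_def)
qed

lemma delta_torsion_mono: "r \<le> s \<Longrightarrow> delta_torsion r \<subseteq> delta_torsion s"
  by (induction s rule: dec_induct) (use delta_torsion_Suc in blast)+

lemma delta_torsion_of_delta:
  "z \<in> lower_central G (Suc n) \<Longrightarrow> delta z \<in> delta_torsion r \<Longrightarrow> z \<in> delta_torsion (Suc r)"
  by (simp add: delta_torsion_def del: funpow.simps add: funpow_Suc_right)

lemma delta_torsion_cong:
  assumes z: "z \<in> delta_torsion r" and z': "z' \<in> lower_central G (Suc n)" and e: "p z = p z'"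
  shows "z' \<in> delta_torsion r"
proof -
  have c: "z \<in> carrier G" "z' \<in> carrier G" using z z' lower_central_carrier by (auto simp: delta_torsion_def)
  have "p ((delta ^^ r) z) = p ((delta ^^ r) z')" by (rule r_coset_funpow_delta_cong[OF c e])
  then show ?thesis using z z' c by (simp add: delta_torsion_def torsion_mod_K2_iff)
qed

end

context lower_central_layer begin

lemma commutator_commutator_mem_K2:
  assumes a: "a \<in> carrier G" and b: "b \<in> carrier G" and c: "c \<in> lower_central G n"
  shows "commutator G (commutator G a b) c \<in> K\<^sub>2"
proof -
  have cc: "c \<in> carrier G" using c lower_central_carrier by blast
  have ic: "inv c \<in> lower_central G n" by (rule subgroup.m_inv_closed[OF subgroup_lower_central c])
  let ?T\<^sub>1 = "inv a \<otimes> commutator G (commutator G a b) c \<otimes> a"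
  let ?T\<^sub>2 = "c \<otimes> commutator G (commutator G (inv c) (inv a)) b \<otimes> inv c"
  let ?T\<^sub>3 = "b \<otimes> commutator G (commutator G (inv b) c) (inv a) \<otimes> inv b"
  have hw: "?T\<^sub>1 \<otimes> ?T\<^sub>2 \<otimes> ?T\<^sub>3 = \<one>" using hall_witt_identity[of "inv b" a "inv c"] a b cc by simp
  have "commutator G (commutator G (inv c) (inv a)) b \<in> K\<^sub>2"
    using a b ic by (intro commutator_in_lower_central' commutator_in_lower_central') auto
  then have T\<^sub>2: "?T\<^sub>2 \<in> K\<^sub>2" using K.inv_op_closed2 cc by (metis inv_inv)
  have "commutator G (commutator G (inv b) c) (inv a) \<in> K\<^sub>2"
    using a b c by (intro commutator_in_lower_central' commutator_in_lower_central) auto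
  then have T\<^sub>3: "?T\<^sub>3 \<in> K\<^sub>2" using K.inv_op_closed2 b by (metis inv_inv inv_closed)
  have "?T\<^sub>1 = inv (?T\<^sub>2 \<otimes> ?T\<^sub>3)"
    using hw a b cc by (metis inv_equality m_assoc m_closed inv_closed commutator_closed)
  then have "?T\<^sub>1 \<in> K\<^sub>2" using T\<^sub>2 T\<^sub>3 by (simp add: K.m_inv_closed K.m_closed)
  then have "a \<otimes> ?T\<^sub>1 \<otimes> inv a \<in> K\<^sub>2" by (rule K.inv_op_closed2[OF a])
  then show ?thesis using a b cc by (simp add: m_assoc)
qed

lemma commutator_derived_mem_K2:
  assumes d: "d \<in> lower_central G (Suc 0)" and y: "y \<in> lower_central G n"
  shows "commutator G d y \<in> K\<^sub>2"
proof -
  let ?C = "{commutator G a b | a b. a \<in> carrier G \<and> b \<in> carrier G}"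
  have C: "?C \<subseteq> carrier G" by auto
  have "d \<in> generate G ?C" using d unfolding lower_central_Suc[of G 0] by simp
  then show ?thesis using y
  proof (induction arbitrary: y rule: generate.induct)
    case one
    then show ?case using lower_central_carrier K.one_closed by simp
  next
    case (incl h)
    then show ?case using commutator_commutator_mem_K2 by auto
  next
    case (inv h)
    then obtain a b where ab: "a \<in> carrier G" "b \<in> carrier G" "h = commutator G a b" by auto
    have hc: "h \<in> carrier G" and yc: "y \<in> carrier G" using ab inv.prems lower_central_carrier by auto
    have "commutator G y h \<in> K\<^sub>2"
      using K.m_inv_closed[OF commutator_commutator_mem_K2[OF ab(1,2) inv.prems]] ab yc
      by (simp add: inv_commutator)
    then have "inv h \<otimes> commutator G y h \<otimes> inv (inv h) \<in> K\<^sub>2" using hc by (intro K.inv_op_closed2) auto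
    then show ?case using hc yc by (simp add: commutator_inv_left)
  next
    case (eng h\<^sub>1 h\<^sub>2)
    have hc: "h\<^sub>1 \<in> carrier G" "h\<^sub>2 \<in> carrier G" using eng.hyps generate_incl[OF C] by auto
    have yc: "y \<in> carrier G" using eng.prems lower_central_carrier by blast
    have "h\<^sub>1 \<otimes> commutator G h\<^sub>2 y \<otimes> inv h\<^sub>1 \<in> K\<^sub>2" using eng.IH(2)[OF eng.prems] hc by (intro K.inv_op_closed2)
    then show ?case using K.m_closed eng.IH(1)[OF eng.prems] hc yc by (simp add: commutator_mult_left)
  qed
qed

lemma central_commutator_r_coset:
  "x \<in> carrier G \<Longrightarrow> y \<in> lower_central G n \<Longrightarrow> central Q (p (commutator G x y))"
  by (intro central_r_coset commutator_in_lower_central)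

lemma r_coset_commutator_mult_left:
  assumes x: "x \<in> carrier G" "x' \<in> carrier G" and y: "y \<in> lower_central G n"
  shows "p (commutator G (x \<otimes> x') y) = p (commutator G x y) \<otimes>\<^bsub>Q\<^esub> p (commutator G x' y)"
  using x y lower_central_carrier[OF y] central_commutator_r_coset[OF x(2) y]
  by (simp add: P.hom_commutator P.H.commutator_mult_left_central)

lemma r_coset_commutator_mult_right:
  assumes x: "x \<in> carrier G" and y: "y \<in> lower_central G n" "y' \<in> lower_central G n"
  shows "p (commutator G x (y \<otimes> y')) = p (commutator G x y) \<otimes>\<^bsub>Q\<^esub> p (commutator G x y')"
  using x y lower_central_carrier[OF y(1)] lower_central_carrier[OF y(2)] central_commutator_r_coset[OF x y(2)]
  by (simp add: P.hom_commutator P.H.commutator_mult_right_central)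

lemma r_coset_commutator_pow_left:
  assumes x: "x \<in> carrier G" and y: "y \<in> lower_central G n"
  shows "p (commutator G (x [^] (m::nat)) y) = p (commutator G x y) [^]\<^bsub>Q\<^esub> m"
  by (induction m) (use x y lower_central_carrier[OF y] r_coset_commutator_mult_left in simp_all)

lemma r_coset_commutator_pow_right:
  assumes x: "x \<in> carrier G" and y: "y \<in> lower_central G n"
  shows "p (commutator G x (y [^] (m::nat))) = p (commutator G x y) [^]\<^bsub>Q\<^esub> m"
proof (induction m)
  case (Suc m)
  have "y [^] m \<in> lower_central G n" by (rule subgroup_nat_pow_closed[OF subgroup_lower_central y])
  then show ?case using Suc r_coset_commutator_mult_right[OF x _ y] by simp
qed (use x in simp)

end

context lower_central_layer begin

lemma r_coset_delta_commutator:
  assumes x: "x \<in> carrier G" and y: "y \<in> lower_central G n"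
  shows "p (delta (commutator G x y)) =
    p (commutator G (delta x) (delta y) \<otimes> commutator G x (delta y) \<otimes> commutator G (delta x) y)"
proof -
  have yc: "y \<in> carrier G" using y by (rule lower_central_carrier)
  have dy: "delta y \<in> lower_central G n" using y by (rule delta_lower_central)
  have "\<phi> (commutator G x y) = commutator G (delta x \<otimes> x) (delta y \<otimes> y)"
    using x yc by (simp add: E.hom_commutator flip: endo_eq_delta_mult)
  then have "p (\<phi> (commutator G x y)) =
      (p (commutator G (delta x) (delta y)) \<otimes>\<^bsub>Q\<^esub> p (commutator G x (delta y))) \<otimes>\<^bsub>Q\<^esub>
      (p (commutator G (delta x) y) \<otimes>\<^bsub>Q\<^esub> p (commutator G x y))"
    using x dy y subgroup.m_closed[OF subgroup_lower_central dy y]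
    by (simp add: r_coset_commutator_mult_left r_coset_commutator_mult_right)
  then show ?thesis
    using x yc dy lower_central_carrier[OF dy]
    by (simp add: delta_def P.H.m_assoc P.H.r_one[unfolded one_FactGroup])
qed

lemma commutator_mem_delta_torsion_0:
  assumes x: "x \<in> carrier G" and y: "y \<in> lower_central G n"
    and tor: "torsion_mod G (lower_central G (Suc 0)) x \<or> torsion_mod G (lower_central G (Suc n)) y"
  shows "commutator G x y \<in> delta_torsion 0"
proof -
  have yc: "y \<in> carrier G" using y by (rule lower_central_carrier)
  obtain m :: nat where "m > 0" and "p (commutator G x y) [^]\<^bsub>Q\<^esub> m = \<one>\<^bsub>Q\<^esub>"
  proof (cases "torsion_mod G (lower_central G (Suc 0)) x")
    case True
    then obtain m :: nat where "m > 0" "x [^] m \<in> lower_central G (Suc 0)" by (rule torsion_modE)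
    moreover have "p (commutator G x y) [^]\<^bsub>Q\<^esub> m = p (commutator G (x [^] m) y)"
      using r_coset_commutator_pow_left[OF x y] by simp
    ultimately show ?thesis
      using that commutator_derived_mem_K2[OF _ y] x yc by (simp add: K.r_coset_eq_self_iff)
  next
    case False
    then obtain m :: nat where "m > 0" "y [^] m \<in> lower_central G (Suc n)" using tor by (auto elim: torsion_modE)
    moreover have "p (commutator G x y) [^]\<^bsub>Q\<^esub> m = p (commutator G x (y [^] m))"
      using r_coset_commutator_pow_right[OF x y] by simp
    ultimately show ?thesis
      using that commutator_in_lower_central[OF x] x yc by (simp add: K.r_coset_eq_self_iff)
  qed
  then have "torsion_mod Q {\<one>\<^bsub>Q\<^esub>} (p (commutator G x y))" by (intro torsion_modI) simp_all
  then show ?thesis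
    using commutator_in_lower_central[OF x y] x yc by (simp add: delta_torsion_def torsion_mod_K2_iff)
qed

lemma commutator_mem_delta_torsion:
  assumes "x \<in> carrier G" "torsion_mod G (lower_central G (Suc 0)) ((delta ^^ a) x)"
    and "y \<in> lower_central G n" "torsion_mod G (lower_central G (Suc n)) ((delta ^^ b) y)"
  shows "commutator G x y \<in> delta_torsion (a + b)"
  using assms
proof (induction "a + b" arbitrary: a b x y rule: less_induct)
  case less
  show ?case
  proof (cases "a = 0 \<or> b = 0")
    case True
    then have "commutator G x y \<in> delta_torsion 0"
      using less.prems by (intro commutator_mem_delta_torsion_0) auto
    then show ?thesis using delta_torsion_mono[of 0 "a + b"] by blast
  next
    case False
    then obtain a' b' where ab: "a = Suc a'" "b = Suc b'" by (metis not0_implies_Suc)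
    have x: "delta x \<in> carrier G" "torsion_mod G (lower_central G (Suc 0)) ((delta ^^ a') (delta x))"
      using less.prems(1,2) by (simp_all add: ab funpow_Suc_right del: funpow.simps)
    have y: "delta y \<in> lower_central G n" "torsion_mod G (lower_central G (Suc n)) ((delta ^^ b') (delta y))"
      using less.prems(3,4) delta_lower_central by (simp_all add: ab funpow_Suc_right del: funpow.simps)
    have "commutator G (delta x) (delta y) \<in> delta_torsion (a' + b)"
      using less.hyps[OF _ x y] delta_torsion_mono[of "a' + b'" "a' + b"] ab by auto
    moreover have "commutator G x (delta y) \<in> delta_torsion (a' + b)"
      using less.hyps[OF _ less.prems(1,2) y] ab by simp
    moreover have "commutator G (delta x) y \<in> delta_torsion (a' + b)"
      using less.hyps[OF _ x less.prems(3,4)] ab by simp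
    ultimately have "commutator G (delta x) (delta y) \<otimes> commutator G x (delta y) \<otimes> commutator G (delta x) y
        \<in> delta_torsion (a' + b)"
      by (intro subgroup.m_closed[OF subgroup_delta_torsion])
    then have "delta (commutator G x y) \<in> delta_torsion (a' + b)"
      by (rule delta_torsion_cong[OF _ delta_lower_central[OF commutator_in_lower_central[OF less.prems(1,3)]]
            r_coset_delta_commutator[OF less.prems(1,3), symmetric]])
    then show ?thesis
      using delta_torsion_of_delta commutator_in_lower_central[OF less.prems(1,3)] ab by simp
  qed
qed

lemma torsion_mod_funpow_delta_lower_central_Suc:
  assumes k\<^sub>1: "\<And>x. x \<in> carrier G \<Longrightarrow> torsion_mod G (lower_central G (Suc 0)) ((delta ^^ k\<^sub>1) x)"
    and k\<^sub>2: "\<And>y. y \<in> lower_central G n \<Longrightarrow> torsion_mod G (lower_central G (Suc n)) ((delta ^^ k\<^sub>2) y)"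
    and z: "z \<in> lower_central G (Suc n)"
  shows "torsion_mod G K\<^sub>2 ((delta ^^ (k\<^sub>1 + k\<^sub>2)) z)"
proof -
  have "lower_central G (Suc n) \<subseteq> delta_torsion (k\<^sub>1 + k\<^sub>2)"
    unfolding lower_central_Suc[of G n]
    using commutator_mem_delta_torsion k\<^sub>1 k\<^sub>2 lower_central_carrier
    by (intro generate_subgroup_incl[OF _ subgroup_delta_torsion]) blast
  then show ?thesis using z by (auto simp: delta_torsion_def)
qed

end

lemma (in group_endo) torsion_mod_funpow_delta_lower_central:
  assumes "\<And>x. x \<in> carrier G \<Longrightarrow> torsion_mod G (lower_central G (Suc 0)) ((delta ^^ k) x)"
  shows "\<exists>k. \<forall>y\<in>lower_central G j. torsion_mod G (lower_central G (Suc j)) ((delta ^^ k) y)"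
proof (induction j)
  case 0
  then show ?case using assms by auto
next
  case (Suc j)
  interpret lower_central_layer G \<phi> j ..
  from Suc obtain k\<^sub>2 where "\<And>y. y \<in> lower_central G j \<Longrightarrow> torsion_mod G (lower_central G (Suc j)) ((delta ^^ k\<^sub>2) y)"
    by blast
  then show ?case using torsion_mod_funpow_delta_lower_central_Suc[OF assms] by blast
qed

context group_endo begin

lemma image_lower_central_of_iso:
  assumes iso: "\<phi> \<in> iso G G" shows "\<phi> ` lower_central G n = lower_central G n"
proof
  show "\<phi> ` lower_central G n \<subseteq> lower_central G n" by (rule endo_image_lower_central[OF endo])
  let ?\<psi> = "inv_into (carrier G) \<phi>"
  have \<psi>: "?\<psi> \<in> hom G G" using iso_set_sym[OF iso] by (simp add: iso_def)
  have bij: "bij_betw \<phi> (carrier G) (carrier G)" using iso by (simp add: iso_def)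
  show "lower_central G n \<subseteq> \<phi> ` lower_central G n"
  proof
    fix d assume d: "d \<in> lower_central G n"
    then have "?\<psi> d \<in> lower_central G n" using endo_image_lower_central[OF \<psi>] by blast
    moreover have "\<phi> (?\<psi> d) = d"
      using bij lower_central_carrier[OF d] by (simp add: bij_betw_def f_inv_into_f)
    ultimately show "d \<in> \<phi> ` lower_central G n" by (metis image_eqI)
  qed
qed

lemma induced_ab_r_coset:
  assumes iso: "\<phi> \<in> iso G G" and x: "x \<in> carrier G"
  shows "induced_ab \<phi> (lower_central G (Suc 0) #> x) = lower_central G (Suc 0) #> \<phi> x"
proof -
  let ?D = "lower_central G (Suc 0)"
  have "\<phi> ` (?D #> x) = (\<phi> ` ?D) #> \<phi> x"
    using x lower_central_carrier by (force simp: r_coset_def image_iff)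
  then show ?thesis unfolding induced_ab_def image_lower_central_of_iso[OF iso] .
qed

lemma torsion_mod_derived_of_rationally_unipotent:
  assumes iso: "\<phi> \<in> iso G G" and ru: "rationally_unipotent (abelianization G) (induced_ab \<phi>)"
  obtains k where "\<And>x. x \<in> carrier G \<Longrightarrow> torsion_mod G (lower_central G (Suc 0)) ((delta ^^ k) x)"
proof -
  let ?D = "lower_central G (Suc 0)"
  let ?A = "G Mod lower_central G (Suc 0)"
  let ?\<psi> = "\<lambda>C. induced_ab \<phi> C \<otimes>\<^bsub>?A\<^esub> inv\<^bsub>?A\<^esub> C"
  interpret D: normal ?D G by (rule normal_lower_central)
  have step: "?\<psi> (?D #> x) = ?D #> delta x" if x: "x \<in> carrier G" for x
  proof -
    have "?D #> x \<in> carrier ?A" using x by (auto simp: carrier_FactGroup)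
    then have "?\<psi> (?D #> x) = (?D #> \<phi> x) <#> (?D #> inv x)"
      using induced_ab_r_coset[OF iso x] D.inv_FactGroup D.rcos_inv[OF x] by simp
    then show ?thesis using x by (simp add: D.rcos_sum delta_def)
  qed
  have iter: "(?\<psi> ^^ k) (?D #> x) = ?D #> (delta ^^ k) x" if "x \<in> carrier G" for x k
    using that step by (induction k) simp_all
  obtain k where k: "\<And>C. C \<in> carrier ?A \<Longrightarrow> torsion_mod ?A {\<one>\<^bsub>?A\<^esub>} ((?\<psi> ^^ k) C)"
    using ru by (auto simp: rationally_unipotent_def abelianization_def lower_central_one_eq_derived
        torsion_mod_def)
  have "torsion_mod G ?D ((delta ^^ k) x)" if x: "x \<in> carrier G" for x
    using k[of "?D #> x"] x iter D.torsion_mod_iff_FactGroup by (auto simp: carrier_FactGroup)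
  then show ?thesis using that by blast
qed

lemma funpow_ne_one:
  assumes "inj_on \<phi> (carrier G)" "s \<in> carrier G" "s \<noteq> \<one>" shows "(\<phi> ^^ n) s \<noteq> \<one>"
proof (induction n)
  case (Suc n)
  then show ?case using assms inj_onD[OF assms(1), of "(\<phi> ^^ n) s" \<one>] by auto
qed (use assms in simp)

end

section \<open>Word length and polynomial orbit growth\<close>

context group begin

lemma foldr_mult_closed: "set ws \<subseteq> carrier G \<Longrightarrow> foldr (\<otimes>) ws \<one> \<in> carrier G"
  by (induction ws) auto

lemma foldr_mult_append:
  assumes "set xs \<subseteq> carrier G" "set ys \<subseteq> carrier G"
  shows "foldr (\<otimes>) (xs @ ys) \<one> = foldr (\<otimes>) xs \<one> \<otimes> foldr (\<otimes>) ys \<one>"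
  using assms by (induction xs) (auto simp: m_assoc foldr_mult_closed)

lemma foldr_mult_rev_map_inv:
  "set xs \<subseteq> carrier G \<Longrightarrow> foldr (\<otimes>) (rev (map (m_inv G) xs)) \<one> = inv (foldr (\<otimes>) xs \<one>)"
proof (induction xs)
  case (Cons a xs)
  have "foldr (\<otimes>) (rev (map (m_inv G) (a # xs))) \<one> = inv (foldr (\<otimes>) xs \<one>) \<otimes> inv a"
    using Cons foldr_mult_append[of "rev (map (m_inv G) xs)" "[inv a]"] by auto
  then show ?case using Cons.prems by (simp add: inv_mult_group foldr_mult_closed)
qed simp

end

locale generated_group = group G for G (structure) +
  fixes S :: "'a set"
  assumes gens_carrier: "S \<subseteq> carrier G" and generate_gens: "generate G S = carrier G"
begin

abbreviation letters :: "'a set" where "letters \<equiv> S \<union> m_inv G ` S"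

lemma letters_carrier: "letters \<subseteq> carrier G"
  using gens_carrier by auto

lemma inv_letters: "a \<in> letters \<Longrightarrow> inv a \<in> letters"
  using gens_carrier by auto

lemma exists_word: "g \<in> carrier G \<Longrightarrow> \<exists>ws. set ws \<subseteq> letters \<and> foldr (\<otimes>) ws \<one> = g"
  unfolding generate_gens[symmetric]
proof (induction rule: generate.induct)
  case one then show ?case by (intro exI[of _ "[]"]) simp
next
  case (incl h) then show ?case by (intro exI[of _ "[h]"]) (use gens_carrier in auto)
next
  case (inv h) then show ?case by (intro exI[of _ "[inv h]"]) (use gens_carrier in auto)
next
  case (eng h1 h2)
  then obtain w1 w2 where "set w1 \<subseteq> letters" "foldr (\<otimes>) w1 \<one> = h1"
    and "set w2 \<subseteq> letters" "foldr (\<otimes>) w2 \<one> = h2" by blast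
  then show ?case
    using foldr_mult_append[of w1 w2] letters_carrier by (intro exI[of _ "w1 @ w2"]) auto
qed

lemma word_length_witness:
  assumes "g \<in> carrier G"
  obtains ws where "length ws = word_length G S g" "set ws \<subseteq> letters" "foldr (\<otimes>) ws \<one> = g"
proof -
  have "\<exists>n ws. length ws = n \<and> set ws \<subseteq> letters \<and> foldr (\<otimes>) ws \<one> = g"
    using exists_word[OF assms] by blast
  from LeastI_ex[OF this] show ?thesis using that unfolding word_length_def by blast
qed

lemma word_length_le: "set ws \<subseteq> letters \<Longrightarrow> word_length G S (foldr (\<otimes>) ws \<one>) \<le> length ws"
  unfolding word_length_def by (rule Least_le) blast

lemma word_length_one [simp]: "word_length G S \<one> = 0"
  using word_length_le[of "[]"] by simp

lemma word_length_mult: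
  assumes "x \<in> carrier G" "y \<in> carrier G"
  shows "word_length G S (x \<otimes> y) \<le> word_length G S x + word_length G S y"
proof -
  obtain w1 where w1: "length w1 = word_length G S x" "set w1 \<subseteq> letters" "foldr (\<otimes>) w1 \<one> = x"
    using word_length_witness[OF assms(1)] .
  obtain w2 where w2: "length w2 = word_length G S y" "set w2 \<subseteq> letters" "foldr (\<otimes>) w2 \<one> = y"
    using word_length_witness[OF assms(2)] .
  have "foldr (\<otimes>) (w1 @ w2) \<one> = x \<otimes> y"
    using w1 w2 letters_carrier foldr_mult_append[of w1 w2] by auto
  then show ?thesis using word_length_le[of "w1 @ w2"] w1 w2 by simp
qed

lemma word_length_inv:
  assumes "x \<in> carrier G" shows "word_length G S (inv x) \<le> word_length G S x"
proof -
  obtain w where w: "length w = word_length G S x" "set w \<subseteq> letters" "foldr (\<otimes>) w \<one> = x"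
    using word_length_witness[OF assms] .
  have "set (rev (map (m_inv G) w)) \<subseteq> letters"
    using w(2) inv_letters by auto
  moreover have "foldr (\<otimes>) (rev (map (m_inv G) w)) \<one> = inv x"
    using foldr_mult_rev_map_inv w letters_carrier by auto
  ultimately show ?thesis using word_length_le[of "rev (map (m_inv G) w)"] w by simp
qed

lemma word_length_pos:
  assumes "x \<in> carrier G" "x \<noteq> \<one>" shows "word_length G S x > 0"
proof (rule ccontr)
  assume "\<not> word_length G S x > 0"
  then obtain ws where "length ws = 0" "foldr (\<otimes>) ws \<one> = x"
    using word_length_witness[OF assms(1)] by (metis gr0I)
  then show False using assms by simp
qed

end

lemma poly_bound_add:
  fixes a b C\<^sub>1 C\<^sub>2 n :: nat
  assumes "a \<le> C\<^sub>1 * Suc n ^ d\<^sub>1" "b \<le> C\<^sub>2 * Suc n ^ d\<^sub>2"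
  shows "a + b \<le> (C\<^sub>1 + C\<^sub>2) * Suc n ^ (d\<^sub>1 + d\<^sub>2)"
proof -
  have "a \<le> C\<^sub>1 * Suc n ^ (d\<^sub>1 + d\<^sub>2)"
    using assms(1) by (rule le_trans) (intro mult_le_mono2 power_increasing; simp)
  moreover have "b \<le> C\<^sub>2 * Suc n ^ (d\<^sub>1 + d\<^sub>2)"
    using assms(2) by (rule le_trans) (intro mult_le_mono2 power_increasing; simp)
  ultimately show ?thesis by (simp add: add_mult_distrib)
qed

lemma poly_bound_mono:
  fixes a C C' n :: nat
  assumes "a \<le> C * Suc n ^ d" "C \<le> C'" "d \<le> d'"
  shows "a \<le> C' * Suc n ^ d'"
proof -
  have "C * Suc n ^ d \<le> C' * Suc n ^ d'"
    using assms(2,3) by (intro mult_le_mono power_increasing) auto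
  then show ?thesis using assms(1) by linarith
qed

locale generated_group_endo = generated_group + group_endo
begin

definition poly_orbit :: "'a set" where
  "poly_orbit = {g \<in> carrier G. \<exists>C d. \<forall>n. word_length G S ((\<phi> ^^ n) g) \<le> C * Suc n ^ d}"

lemma poly_orbitI:
  "g \<in> carrier G \<Longrightarrow> (\<And>n. word_length G S ((\<phi> ^^ n) g) \<le> C * Suc n ^ d) \<Longrightarrow> g \<in> poly_orbit"
  unfolding poly_orbit_def by blast

lemma subgroup_poly_orbit: "subgroup poly_orbit G"
proof (rule subgroupI)
  show "poly_orbit \<subseteq> carrier G" by (auto simp: poly_orbit_def)
  show "poly_orbit \<noteq> {}" using poly_orbitI[of \<one> 0 0] by auto
next
  fix x assume "x \<in> poly_orbit"
  then obtain C d where x: "x \<in> carrier G" and bd: "\<And>n. word_length G S ((\<phi> ^^ n) x) \<le> C * Suc n ^ d"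
    unfolding poly_orbit_def by blast
  show "inv x \<in> poly_orbit"
    using x word_length_inv[of "(\<phi> ^^ _) x"] bd by (intro poly_orbitI[of _ C d]) (auto intro: le_trans)
next
  fix x y assume "x \<in> poly_orbit" "y \<in> poly_orbit"
  then obtain C\<^sub>1 d\<^sub>1 C\<^sub>2 d\<^sub>2 where x: "x \<in> carrier G" "\<And>n. word_length G S ((\<phi> ^^ n) x) \<le> C\<^sub>1 * Suc n ^ d\<^sub>1"
    and y: "y \<in> carrier G" "\<And>n. word_length G S ((\<phi> ^^ n) y) \<le> C\<^sub>2 * Suc n ^ d\<^sub>2"
    unfolding poly_orbit_def by blast
  show "x \<otimes> y \<in> poly_orbit"
  proof (rule poly_orbitI[of _ "C\<^sub>1 + C\<^sub>2" "d\<^sub>1 + d\<^sub>2"])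
    fix n
    have "word_length G S ((\<phi> ^^ n) (x \<otimes> y)) \<le> word_length G S ((\<phi> ^^ n) x) + word_length G S ((\<phi> ^^ n) y)"
      using x y by (simp add: word_length_mult)
    also have "\<dots> \<le> (C\<^sub>1 + C\<^sub>2) * Suc n ^ (d\<^sub>1 + d\<^sub>2)" using x y by (intro poly_bound_add)
    finally show "word_length G S ((\<phi> ^^ n) (x \<otimes> y)) \<le> (C\<^sub>1 + C\<^sub>2) * Suc n ^ (d\<^sub>1 + d\<^sub>2)" .
  qed (use x y in simp)
qed

lemma poly_orbit_uniform_bound:
  "finite A \<Longrightarrow> A \<subseteq> poly_orbit \<Longrightarrow> \<exists>C d. \<forall>a\<in>A. \<forall>n. word_length G S ((\<phi> ^^ n) a) \<le> C * Suc n ^ d"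
proof (induction A rule: finite_induct)
  case (insert a A)
  then obtain C\<^sub>1 d\<^sub>1 where A: "\<forall>b\<in>A. \<forall>n. word_length G S ((\<phi> ^^ n) b) \<le> C\<^sub>1 * Suc n ^ d\<^sub>1" by auto
  obtain C\<^sub>2 d\<^sub>2 where a: "\<And>n. word_length G S ((\<phi> ^^ n) a) \<le> C\<^sub>2 * Suc n ^ d\<^sub>2"
    using insert.prems unfolding poly_orbit_def by blast
  have "\<forall>b\<in>insert a A. \<forall>n. word_length G S ((\<phi> ^^ n) b) \<le> (C\<^sub>1 + C\<^sub>2) * Suc n ^ (d\<^sub>1 + d\<^sub>2)"
    using A poly_bound_mono[OF a le_add2 le_add2] poly_bound_mono[OF _ le_add1 le_add1] by blast
  then show ?case by blast
qed simp

lemma orbit_length_linear_recursion: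
  assumes F: "F \<subseteq> carrier G" and \<sigma>: "\<And>x. x \<in> F \<Longrightarrow> \<sigma> x \<in> F"
    and y: "\<And>x. x \<in> F \<Longrightarrow> y x \<in> carrier G \<and> \<phi> x = y x \<otimes> \<sigma> x"
    and bound: "\<And>x n. x \<in> F \<Longrightarrow> word_length G S ((\<phi> ^^ n) (y x)) \<le> C * Suc n ^ d"
    and M: "\<And>x. x \<in> F \<Longrightarrow> word_length G S x \<le> M"
  shows "x \<in> F \<Longrightarrow> word_length G S ((\<phi> ^^ n) x) \<le> M + n * C * Suc n ^ d"
proof (induction n arbitrary: x)
  case (Suc n)
  have carr: "x \<in> carrier G" "\<sigma> x \<in> carrier G" "y x \<in> carrier G" using Suc.prems F \<sigma> y by auto
  have "(\<phi> ^^ Suc n) x = (\<phi> ^^ n) (\<phi> x)"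
    by (simp only: funpow_Suc_right comp_def)
  also have "\<dots> = (\<phi> ^^ n) (y x) \<otimes> (\<phi> ^^ n) (\<sigma> x)"
    using y[OF Suc.prems] carr by simp
  finally have "(\<phi> ^^ Suc n) x = (\<phi> ^^ n) (y x) \<otimes> (\<phi> ^^ n) (\<sigma> x)" .
  then have "word_length G S ((\<phi> ^^ Suc n) x) \<le> word_length G S ((\<phi> ^^ n) (y x)) + word_length G S ((\<phi> ^^ n) (\<sigma> x))"
    using carr by (simp add: word_length_mult)
  also have "\<dots> \<le> C * Suc n ^ d + (M + n * C * Suc n ^ d)"
    using bound Suc.prems Suc.IH \<sigma> by (intro add_le_mono) auto
  also have "\<dots> = M + Suc n * C * Suc n ^ d"
    by (simp add: algebra_simps)
  also have "\<dots> \<le> M + Suc n * C * Suc (Suc n) ^ d"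
    by (intro add_le_mono mult_le_mono2 power_mono) auto
  finally show ?case .
qed (use M in simp)

lemma subset_poly_orbitI:
  assumes F: "finite F" "F \<subseteq> carrier G" and \<sigma>: "\<And>x. x \<in> F \<Longrightarrow> \<sigma> x \<in> F"
    and step: "\<And>x. x \<in> F \<Longrightarrow> \<exists>y\<in>poly_orbit. \<phi> x = y \<otimes> \<sigma> x"
  shows "F \<subseteq> poly_orbit"
proof
  obtain y where y: "\<And>x. x \<in> F \<Longrightarrow> y x \<in> poly_orbit \<and> \<phi> x = y x \<otimes> \<sigma> x"
    using step by metis
  obtain C d where C: "\<forall>a\<in>y ` F. \<forall>n. word_length G S ((\<phi> ^^ n) a) \<le> C * Suc n ^ d"
    using poly_orbit_uniform_bound[of "y ` F"] F y by blast
  define M where "M = (\<Sum>x\<in>F. word_length G S x)"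
  have M: "word_length G S x \<le> M" if "x \<in> F" for x
    unfolding M_def using F(1) that by (intro member_le_sum) auto
  fix x assume x: "x \<in> F"
  show "x \<in> poly_orbit"
  proof (rule poly_orbitI[of _ "M + C" "Suc d"])
    fix n
    have "word_length G S ((\<phi> ^^ n) x) \<le> M + n * C * Suc n ^ d"
    proof (rule orbit_length_linear_recursion[where y = y, OF F(2) \<sigma> _ _ M x])
      show "y z \<in> carrier G \<and> \<phi> z = y z \<otimes> \<sigma> z" if "z \<in> F" for z
        using y[OF that] subgroup.mem_carrier[OF subgroup_poly_orbit] by blast
      show "word_length G S ((\<phi> ^^ k) (y z)) \<le> C * Suc k ^ d" if "z \<in> F" for z k
        using C that by blast
    qed
    also have "\<dots> \<le> M * Suc n ^ Suc d + Suc n * C * Suc n ^ d"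
    proof (rule add_le_mono)
      show "M \<le> M * Suc n ^ Suc d" using mult_le_mono2[OF one_le_power[of "Suc n" "Suc d"], of M] by simp
    qed simp
    also have "\<dots> = (M + C) * Suc n ^ Suc d"
      by (simp add: algebra_simps)
    finally show "word_length G S ((\<phi> ^^ n) x) \<le> (M + C) * Suc n ^ Suc d" .
  qed (use x F in blast)
qed

end

context generated_group_endo begin

lemma poly_orbit_of_delta:
  assumes "x \<in> carrier G" "delta x \<in> poly_orbit" shows "x \<in> poly_orbit"
proof -
  have "{x} \<subseteq> poly_orbit"
    using assms by (intro subset_poly_orbitI[where \<sigma> = id]) (auto simp: endo_eq_delta_mult)
  then show ?thesis by simp
qed

lemma torsion_mod_layer_subset_poly_orbit:
  assumes H: "H \<lhd> G" and K: "subgroup K G" "H \<subseteq> K" "\<phi> ` K \<subseteq> K" "\<phi> ` H \<subseteq> H"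
    and comm: "\<And>x y. x \<in> K \<Longrightarrow> y \<in> K \<Longrightarrow> commutator G x y \<in> H"
    and F: "finite F" "F \<subseteq> K" "K \<subseteq> generate G (F \<union> H)"
    and HP: "H \<subseteq> poly_orbit"
    and x: "x \<in> K" "torsion_mod G H x"
  shows "x \<in> poly_orbit"
proof -
  interpret H: normal H G by (rule H)
  have KM: "generate G (F \<union> H) = K"
    using F K generate_subgroup_incl[OF _ K(1), of "F \<union> H"] by blast
  have Kc: "K \<subseteq> carrier G" by (rule subgroup.subset[OF K(1)])
  have Fc: "F \<subseteq> carrier G" using F(2) Kc by blast
  have comm': "commutator G a b \<in> H" if "a \<in> generate G (F \<union> H)" "b \<in> generate G (F \<union> H)" for a b
    using comm that unfolding KM .
  obtain R where R: "finite R" "R \<subseteq> {x \<in> generate G (F \<union> H). torsion_mod G H x}"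
    and rep: "\<And>x. x \<in> generate G (F \<union> H) \<Longrightarrow> torsion_mod G H x \<Longrightarrow> \<exists>r\<in>R. \<exists>h\<in>H. x = h \<otimes> r"
    using H.finite_torsion_mod_representatives[OF F(1) Fc comm'] by blast
  note R = R[unfolded KM] and rep = rep[unfolded KM]
  have "\<exists>r'\<in>R. \<exists>h\<in>H. \<phi> r = h \<otimes> r'" if r: "r \<in> R" for r
  proof -
    obtain m :: nat where m: "m > 0" "r [^] m \<in> H" using R r by (auto elim: torsion_modE)
    have "\<phi> r [^] m = \<phi> (r [^] m)" using r R Kc by (auto simp: E.hom_nat_pow)
    then have "torsion_mod G H (\<phi> r)" using m K(4) by (auto intro: torsion_modI)
    then show ?thesis using rep K(3) r R by blast
  qed
  then obtain \<sigma> where \<sigma>: "\<And>r. r \<in> R \<Longrightarrow> \<sigma> r \<in> R \<and> (\<exists>h\<in>H. \<phi> r = h \<otimes> \<sigma> r)"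
    by metis
  have "R \<subseteq> poly_orbit"
    using R Kc \<sigma> HP by (intro subset_poly_orbitI[where \<sigma> = \<sigma>]) blast+
  then show ?thesis
    using rep[OF x] HP subgroup.m_closed[OF subgroup_poly_orbit] by blast
qed

lemma central_layer_subset_poly_orbit:
  assumes H: "H \<lhd> G" and K: "subgroup K G" "H \<subseteq> K" "\<phi> ` K \<subseteq> K" "\<phi> ` H \<subseteq> H"
    and comm: "\<And>x y. x \<in> K \<Longrightarrow> y \<in> K \<Longrightarrow> commutator G x y \<in> H"
    and F: "finite F" "F \<subseteq> K" "K \<subseteq> generate G (F \<union> H)"
    and HP: "H \<subseteq> poly_orbit"
    and unip: "\<And>x. x \<in> K \<Longrightarrow> torsion_mod G H ((delta ^^ k) x)"
  shows "K \<subseteq> poly_orbit"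
proof -
  have delta_K: "x \<in> K \<Longrightarrow> delta x \<in> K" for x
    unfolding delta_def using K(3) subgroup.m_closed[OF K(1)] subgroup.m_inv_closed[OF K(1)] by blast
  have "x \<in> K \<Longrightarrow> torsion_mod G H ((delta ^^ j) x) \<Longrightarrow> x \<in> poly_orbit" for j x
  proof (induction j arbitrary: x)
    case 0
    then show ?case using torsion_mod_layer_subset_poly_orbit[OF assms(1-10)] by simp
  next
    case (Suc j)
    have "(delta ^^ Suc j) x = (delta ^^ j) (delta x)" by (simp only: funpow_Suc_right comp_def)
    then have "delta x \<in> poly_orbit"
      using Suc.IH[of "delta x"] delta_K[OF Suc.prems(1)] Suc.prems(2) by simp
    then show ?case using poly_orbit_of_delta subgroup.mem_carrier[OF K(1) Suc.prems(1)] by blast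
  qed
  then show ?thesis using unip by blast
qed

end

section \<open>Entropy\<close>

lemma (in generated_group) exists_gen_ne_one:
  assumes "carrier G \<noteq> {\<one>}" obtains s where "s \<in> S" "s \<noteq> \<one>"
proof -
  have "\<not> S \<subseteq> {\<one>}"
    using mono_generate[of S "{\<one>}"] generate_gens generate_one assms by auto
  then show ?thesis using that by blast
qed

lemma poly_root_tendsto_1: "(C::real) > 0 \<Longrightarrow> (\<lambda>n. (C * (real n + 1) ^ d) powr (1 / real n)) \<longlonglongrightarrow> 1"
  by real_asymp

context generated_group_endo begin

lemma carrier_subset_poly_orbit:
  assumes S: "finite S" and nil: "lower_central G c = {\<one>}"
    and unip: "\<And>x. x \<in> carrier G \<Longrightarrow> torsion_mod G (lower_central G (Suc 0)) ((delta ^^ k) x)"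
  shows "carrier G \<subseteq> poly_orbit"
proof -
  have "j \<le> c \<Longrightarrow> lower_central G j \<subseteq> poly_orbit" for j
  proof (induction j rule: inc_induct)
    case base
    show ?case using nil subgroup.one_closed[OF subgroup_poly_orbit] by simp
  next
    case (step j)
    obtain k' where k': "\<forall>y\<in>lower_central G j. torsion_mod G (lower_central G (Suc j)) ((delta ^^ k') y)"
      using torsion_mod_funpow_delta_lower_central[OF unip] by blast
    show ?case
    proof (rule central_layer_subset_poly_orbit[where k = k' and F = "iterated_commutators G S j"])
      show "lower_central G (Suc j) \<lhd> G" by (rule normal_lower_central)
      show "subgroup (lower_central G j) G" by (rule subgroup_lower_central)
      show "lower_central G (Suc j) \<subseteq> lower_central G j" by (rule lower_central_Suc_subset)
      show "\<phi> ` lower_central G j \<subseteq> lower_central G j" "\<phi> ` lower_central G (Suc j) \<subseteq> lower_central G (Suc j)"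
        by (rule endo_image_lower_central[OF endo])+
      show "commutator G x y \<in> lower_central G (Suc j)" if "x \<in> lower_central G j" "y \<in> lower_central G j" for x y
        using that lower_central_carrier commutator_in_lower_central by blast
      show "finite (iterated_commutators G S j)" by (rule finite_iterated_commutators[OF S])
      show "iterated_commutators G S j \<subseteq> lower_central G j" by (rule iterated_commutators_subset[OF gens_carrier])
      show "lower_central G j \<subseteq> generate G (iterated_commutators G S j \<union> lower_central G (Suc j))"
        by (rule lower_central_subset_generate_iterated[OF gens_carrier generate_gens])
      show "lower_central G (Suc j) \<subseteq> poly_orbit" by (rule step.IH)
      show "torsion_mod G (lower_central G (Suc j)) ((delta ^^ k') x)" if "x \<in> lower_central G j" for x
        using k' that by blast
    qed
  qed
  from this[of 0] show ?thesis by simp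
qed

lemma growth_seq_tendsto_1:
  assumes s: "s \<in> poly_orbit" and ne: "\<And>n. (\<phi> ^^ n) s \<noteq> \<one>"
  shows "growth_seq G S \<phi> s \<longlonglongrightarrow> 1"
proof -
  obtain C d where sc: "s \<in> carrier G" and C: "\<And>n. word_length G S ((\<phi> ^^ n) s) \<le> C * Suc n ^ d"
    using s unfolding poly_orbit_def by blast
  have pos: "word_length G S ((\<phi> ^^ n) s) \<ge> 1" for n
    using word_length_pos[OF funpow_closed[OF sc] ne[of n]] by simp
  then have "C > 0" using C[of 0] pos[of 0] by (cases C) auto
  then have lim: "(\<lambda>n. (real C * (real n + 1) ^ d) powr (1 / real n)) \<longlonglongrightarrow> 1"
    by (intro poly_root_tendsto_1) simp
  have low: "1 \<le> growth_seq G S \<phi> s n" for n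
    unfolding growth_seq_def using pos[of n] by (intro ge_one_powr_ge_zero) auto
  have up: "growth_seq G S \<phi> s n \<le> (real C * (real n + 1) ^ d) powr (1 / real n)" for n
  proof -
    have "real (word_length G S ((\<phi> ^^ n) s)) \<le> real (C * Suc n ^ d)" by (rule of_nat_mono[OF C])
    also have "\<dots> = real C * (real n + 1) ^ d" by (simp add: add.commute)
    finally show ?thesis unfolding growth_seq_def by (intro powr_mono2) auto
  qed
  show ?thesis
    by (rule tendsto_sandwich[rotated 2, OF tendsto_const lim]) (use low up in auto)
qed

lemma growth_seq_one: "growth_seq G S \<phi> \<one> = (\<lambda>n. 0)"
  by (simp add: growth_seq_def fun_eq_iff)

end

theorem corollary1p5:
  fixes N :: "('a, 'b) monoid_scheme" and \<phi> :: "'a \<Rightarrow> 'a" and S :: "'a set"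
  assumes "group N"
    and "finitely_generated_group N"
    and "torsion_free_group N"
    and "nilpotent_group N"
    and "carrier N \<noteq> {\<one>\<^bsub>N\<^esub>}"
    and "\<phi> \<in> iso N N"
    and "rationally_unipotent (abelianization N) (induced_ab \<phi>)"
    and "finite S" and "S \<subseteq> carrier N" and "generate N S = carrier N"
  shows "(\<forall>s \<in> S. convergent (growth_seq N S \<phi> s)) \<and> aut_entropy N S \<phi> = 1"
proof -
  have "\<phi> \<in> hom N N" using assms(6) by (simp add: iso_def)
  then interpret generated_group_endo N S \<phi>
    using assms(1,9,10) by (simp add: generated_group_endo_def generated_group_def
        generated_group_axioms_def group_endo_def group_endo_axioms_def)
  obtain c where c: "lower_central N c = {\<one>\<^bsub>N\<^esub>}" using assms(4) by (auto simp: nilpotent_group_def)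
  obtain k where "\<And>x. x \<in> carrier N \<Longrightarrow> torsion_mod N (lower_central N (Suc 0)) ((delta ^^ k) x)"
    using torsion_mod_derived_of_rationally_unipotent[OF assms(6,7)] by blast
  then have poly: "carrier N \<subseteq> poly_orbit" by (rule carrier_subset_poly_orbit[OF assms(8) c])
  have inj: "inj_on \<phi> (carrier N)" using assms(6) by (simp add: iso_def bij_betw_def)
  have lim: "growth_seq N S \<phi> s \<longlonglongrightarrow> (if s = \<one>\<^bsub>N\<^esub> then 0 else 1)" if "s \<in> S" for s
  proof (cases "s = \<one>\<^bsub>N\<^esub>")
    case False
    then have "growth_seq N S \<phi> s \<longlonglongrightarrow> 1"
      using that poly gens_carrier by (intro growth_seq_tendsto_1 funpow_ne_one[OF inj]) auto
    then show ?thesis using False by simp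
  qed (simp add: growth_seq_one)
  obtain s\<^sub>0 where "s\<^sub>0 \<in> S" "s\<^sub>0 \<noteq> \<one>\<^bsub>N\<^esub>"
    using exists_gen_ne_one[OF assms(5)] .
  then have "aut_entropy N S \<phi> = 1"
    unfolding aut_entropy_def using assms(8) limI[OF lim] by (intro Max_eqI) force+
  then show ?thesis using lim convergentI by blast
qed

end
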